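(* Let $p>3$ be prime, let $a,b\in\mathbb{Q}_p$ with $ab\neq 0$, and suppose $(a,b)\in\Delta_1\cup\Delta_3$. Consider the cubic equation $x^3+ax=b$ over $\mathbb{Q}_p$. Then: 1. It is solvable in $(\mathbb{Z}_p^* )^{[3]}$ iff $(a,b)\in\Delta_1$, $|b|_p=1$ and $p\equiv 1 \pmod 3$. 2. It is solvable in $(\mathbb{Z}_p\setminus\mathbb{Z}_p^* )^{[3]}$ iff either [$(a,b)\in\Delta_1$, $|b|_p<1$, $p\equiv 1\pmod 3$] or [$(a,b)\in\Delta_3$, $|a|_p<1$, $\sqrt{-a}$ exists]. 3. It is solvable in $(\mathbb{Q}_p\setminus\mathbb{Z}_p)^{[3]}$ iff either [$(a,b)\in\Delta_1$, $|b|_p>1$, $p\equiv 1\pmod 3$] or [$(a,b)\in\Delta_3$, $|b|_p>|a|_p$, $\sqrt{-a}$ exists]. 4. It is solvable in $(\mathbb{Z}_p\setminus\mathbb{Z}_p^* )^{[1]}\sqcup(\mathbb{Z}_p^* )^{[2]}$ iff $(a,b)\in\Delta_3$, $|a|_p=1$ and $\sqrt{-a}$ exists. 5. It is solvable in $(\mathbb{Z}_p^* )^{[1]}\sqcup(\mathbb{Q}_p\setminus\mathbb{Z}_p)^{[2]}$ iff $(a,b)\in\Delta_3$, $|a|_p=|b|_p$ and $\sqrt{-a}$ exists. 6. It is solvable in $(\mathbb{Z}_p\setminus\mathbb{Z}_p^* )^{[1]}\sqcup(\mathbb{Q}_p\setminus\mathbb{Z}_p)^{[2]}$ iff $(a,b)\in\Delta_3$,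 $|a|_p>|b|_p$, $|a|_p>1$ and $\sqrt{-a}$ exists. 7. It is solvable in $(\mathbb{Z}_p^* )^{[1]}$ iff either [$(a,b)\in\Delta_1$, $|b|_p=1$, $p\equiv 2\pmod 3$] or [$(a,b)\in\Delta_3$, $|a|_p=|b|_p$, $\sqrt{-a}$ does not exist]. 8. It is solvable in $(\mathbb{Z}_p\setminus\mathbb{Z}_p^* )^{[1]}$ iff either [$(a,b)\in\Delta_1$, $|b|_p<1$, $p\equiv 2\pmod 3$] or [$(a,b)\in\Delta_3$, $|a|_p>|b|_p$, $\sqrt{-a}$ does not exist]. 9. It is solvable in $(\mathbb{Q}_p\setminus\mathbb{Z}_p)^{[1]}$ iff either [$(a,b)\in\Delta_1$, $|b|_p>1$, $p\equiv 2\pmod 3$] or [$(a,b)\in\Delta_3$, $|a|_p<|b|_p$, $\sqrt{-a}$ does not exist].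
   Context: $\mathbb{Z}_p=\{x\in\mathbb{Q}_p:|x|_p\le1\}$, $\mathbb{Z}_p^*=\{x:|x|_p=1\}$. Every nonzero $c\in\mathbb{Q}_p$ is written $c=c^*/|c|_p$ with $c^*\in\mathbb{Z}_p^*$, $c^*=c_0+c_1p+c_2p^2+\cdots$, $c_0\in\{1,\dots,p-1\}$, $c_i\in\{0,\dots,p-1\}$. For nonzero $c$: "$\sqrt{c}$ exists" means $c_0^{(p-1)/2}\equiv 1\pmod p$ and $\log_p|c|_p$ is even; "$\sqrt[3]{c}$ exists" means $c_0^{(p-1)/\gcd(3,p-1)}\equiv 1\pmod p$ and $\log_p|c|_p$ is divisible by $3$ (equivalently, $x^2=c$, resp. $x^3=c$, is solvable in $\mathbb{Q}_p$). With $a_0,b_0$ the leading digits of $a^*,b^*$: $D_0=-4a_0^3-27b_0^2$, and integers $u_n$ are defined by $u_1=0,\ u_2=-a_0,\ u_3=b_0,\ u_{n+3}=b_0u_n-a_0u_{n+1}$. Sets: $\Delta_1=\{(a,b): |a|_p^3<|b|_p^2,\ \sqrt[3]{b}\text{ exists}\}$, $\Delta_2=\{(a,b): |a|_p^3=|b|_p^2,\ D_0u_{p-2}^2\not\equiv 9a_0^2 \pmod p\}$, $\Delta_3=\{(a,b): |a|_p^3>|b|_p^2\}$. Roots of $x^3+ax=b$ are taken in $\mathbb{Q}_p$ and counted with multiplicity. For $A\subset\mathbb{Q}_p$ and $n\in\{1,3\}$, "solvable in $A^{[n]}$" means the equation has exactly $n$ roots in $\mathbb{Q}_p$ (with multiplicity)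 and all lie in $A$. For disjoint $A,B$ and $m,n>0$, $m+n=3$, "solvable in $A^{[n]}\sqcup B^{[m]}$" means exactly $n$ of its roots (with multiplicity) lie in $A$ and exactly $m$ lie in $B$. *)

theory Defs
  imports "HOL-Computational_Algebra.Computational_Algebra" "HOL-Library.Cardinality"
begin

class prime_card = assumes prime_card: "prime (CARD('a))"

lemma prime_card_int: "prime (int CARD('a::prime_card))"
  using prime_card by simp

lemma prime_card_gt1: "int CARD('a::prime_card) > 1"
  using prime_card_int[where 'a='a] prime_gt_1_int by blast

section \<open>p-adic integers as coherent sequences (x_n mod p^n)\<close>

definition zp_seqs :: "int \<Rightarrow> (nat \<Rightarrow> int) set" where
  "zp_seqs p = {f. \<forall>n. f n = f (Suc n) mod p ^ n}"

typedef (overloaded) ('p::prime_card) zp = "zp_seqs (int CARD('p))"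
  by (rule exI[of _ "\<lambda>_. 0"]) (simp add: zp_seqs_def)

setup_lifting type_definition_zp

abbreviation pp :: "'p::prime_card itself \<Rightarrow> int" where
  "pp _ \<equiv> int CARD('p)"

lemma zp_seqs_mod:
  assumes "f \<in> zp_seqs p" shows "f n = f n mod p ^ n"
proof -
  have "f n = f (Suc n) mod p ^ n" using assms unfolding zp_seqs_def by blast
  then show ?thesis by (metis mod_mod_trivial)
qed

lemma zp_seqs_I:
  assumes "\<And>n. F (Suc n) mod p ^ n = F n mod p ^ n"
  shows "(\<lambda>n. F n mod p ^ n) \<in> zp_seqs p"
  unfolding zp_seqs_def mem_Collect_eq
proof
  fix n
  have "p ^ n dvd p ^ Suc n" by (rule le_imp_power_dvd) simp
  then have "F (Suc n) mod p ^ Suc n mod p ^ n = F (Suc n) mod p ^ n"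
    by (rule mod_mod_cancel)
  then show "F n mod p ^ n = F (Suc n) mod p ^ Suc n mod p ^ n"
    by (rule trans[OF assms[of n, symmetric] sym])
qed

lemma zp_seqs_step:
  assumes "f \<in> zp_seqs p" shows "f (Suc n) mod p ^ n = f n mod p ^ n"
proof -
  have "f n = f (Suc n) mod p ^ n" using assms unfolding zp_seqs_def by blast
  then show ?thesis by (metis mod_mod_trivial)
qed

instantiation zp :: (prime_card) comm_ring_1
begin

lift_definition zero_zp :: "'a zp" is "\<lambda>_. 0"
  by (simp add: zp_seqs_def)

lift_definition one_zp :: "'a zp" is "\<lambda>n. 1 mod (int CARD('a)) ^ n"
  by (rule zp_seqs_I) simp

lift_definition plus_zp :: "'a zp \<Rightarrow> 'a zp \<Rightarrow> 'a zp"
  is "\<lambda>f g n. (f n + g n) mod (int CARD('a)) ^ n"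
  by (rule zp_seqs_I) (rule mod_add_cong; rule zp_seqs_step; assumption)

lift_definition uminus_zp :: "'a zp \<Rightarrow> 'a zp"
  is "\<lambda>f n. (- f n) mod (int CARD('a)) ^ n"
  by (rule zp_seqs_I) (rule mod_minus_cong, rule zp_seqs_step, assumption)

lift_definition minus_zp :: "'a zp \<Rightarrow> 'a zp \<Rightarrow> 'a zp"
  is "\<lambda>f g n. (f n - g n) mod (int CARD('a)) ^ n"
  by (rule zp_seqs_I) (rule mod_diff_cong; rule zp_seqs_step; assumption)

lift_definition times_zp :: "'a zp \<Rightarrow> 'a zp \<Rightarrow> 'a zp"
  is "\<lambda>f g n. (f n * g n) mod (int CARD('a)) ^ n"
  by (rule zp_seqs_I) (rule mod_mult_cong; rule zp_seqs_step; assumption)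

instance
proof
  fix x y z :: "'a zp"
  note defs = Rep_zp_inject[symmetric] fun_eq_iff plus_zp.rep_eq times_zp.rep_eq
    uminus_zp.rep_eq minus_zp.rep_eq zero_zp.rep_eq one_zp.rep_eq
  have R: "Rep_zp w n mod int CARD('a) ^ n = Rep_zp w n" for w :: "'a zp" and n
    using zp_seqs_mod[OF Rep_zp[of w], of n] by (rule sym)
  show "x * y * z = x * (y * z)"
    unfolding defs by (simp add: mod_simps algebra_simps)
  show "x * y = y * x"
    unfolding defs by (simp add: mod_simps algebra_simps)
  show "1 * x = x"
    unfolding defs by (simp add: mod_simps R)
  show "x + y + z = x + (y + z)"
    unfolding defs by (simp add: mod_simps algebra_simps)
  show "x + y = y + x"
    unfolding defs by (simp add: mod_simps algebra_simps)
  show "0 + x = x"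
    unfolding defs by (simp add: R)
  show "- x + x = 0"
    unfolding defs by (simp add: mod_simps)
  show "x - y = x + - y"
    unfolding defs by (simp add: mod_simps)
  show "(x + y) * z = x * z + y * z"
    unfolding defs by (simp add: mod_simps algebra_simps)
  show "(0::'a zp) \<noteq> 1"
  proof
    assume "(0::'a zp) = 1"
    then have "Rep_zp (0::'a zp) 1 = Rep_zp (1::'a zp) 1" by simp
    then show False using prime_card_gt1[where 'a='a]
      by (simp add: zero_zp.rep_eq one_zp.rep_eq)
  qed
qed

end

lemma zp_seqs_le:
  assumes "f \<in> zp_seqs p" "m \<le> n" shows "f m = f n mod p ^ m"
  using assms(2)
proof (induction n rule: dec_induct)
  case base
  then show ?case by (rule zp_seqs_mod[OF assms(1)])
next
  case (step n)
  have "p ^ m dvd p ^ n" using step(1) by (rule le_imp_power_dvd)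
  then have "f (Suc n) mod p ^ n mod p ^ m = f (Suc n) mod p ^ m"
    by (rule mod_mod_cancel)
  moreover have "f n = f (Suc n) mod p ^ n"
    using assms(1) unfolding zp_seqs_def by blast
  ultimately show ?case using step(3) by simp
qed

lemma zp_nonzero_exact:
  fixes x :: "'a::prime_card zp"
  assumes "x \<noteq> 0"
  shows "\<exists>k. \<forall>n>k. int CARD('a) ^ k dvd Rep_zp x n \<and> \<not> int CARD('a) ^ Suc k dvd Rep_zp x n"
proof -
  define p where "p = int CARD('a)"
  have p1: "p > 1" unfolding p_def by (rule prime_card_gt1)
  define f where "f = Rep_zp x"
  have fS: "f \<in> zp_seqs p" unfolding f_def p_def by (rule Rep_zp)
  have "f \<noteq> (\<lambda>_. 0)"
  proof
    assume "f = (\<lambda>_. 0)"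
    then have "Rep_zp x = Rep_zp 0" by (simp add: f_def zero_zp.rep_eq)
    then show False using assms Rep_zp_inject by blast
  qed
  then have ex: "\<exists>a. f a \<noteq> 0" by auto
  define a where "a = (LEAST a. f a \<noteq> 0)"
  have fa: "f a \<noteq> 0" unfolding a_def using ex by (rule LeastI_ex)
  have f0: "f 0 = 0" using zp_seqs_mod[OF fS, of 0] by simp
  have a0: "a \<noteq> 0"
  proof
    assume "a = 0" then show False using fa f0 by simp
  qed
  then obtain k where ak: "a = Suc k" by (cases a) auto
  have fk: "f k = 0" using not_less_Least[of k "\<lambda>a. f a \<noteq> 0"] ak a_def by auto
  show ?thesis
  proof (intro exI allI impI conjI)
    fix n assume "k < n"
    then have kn: "k \<le> n" "Suc k \<le> n" by auto
    have "f n mod p ^ k = 0" using zp_seqs_le[OF fS kn(1)] fk by simp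
    then show "int CARD('a) ^ k dvd Rep_zp x n" by (simp add: f_def p_def dvd_eq_mod_eq_0)
    have "f n mod p ^ Suc k \<noteq> 0" using zp_seqs_le[OF fS kn(2)] fa ak by simp
    then show "\<not> int CARD('a) ^ Suc k dvd Rep_zp x n" by (simp add: f_def p_def dvd_eq_mod_eq_0)
  qed
qed

instance zp :: (prime_card) idom
proof
  fix x y :: "'a zp"
  assume x: "x \<noteq> 0" and y: "y \<noteq> 0"
  define p where "p = int CARD('a)"
  have pp: "prime p" unfolding p_def by (rule prime_card_int)
  obtain k where k: "\<And>n. n > k \<Longrightarrow> p ^ k dvd Rep_zp x n \<and> \<not> p ^ Suc k dvd Rep_zp x n"
    using zp_nonzero_exact[OF x] unfolding p_def by blast
  obtain l where l: "\<And>n. n > l \<Longrightarrow> p ^ l dvd Rep_zp y n \<and> \<not> p ^ Suc l dvd Rep_zp y n"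
    using zp_nonzero_exact[OF y] unfolding p_def by blast
  define n where "n = Suc (k + l)"
  have kn: "n > k" and ln: "n > l" unfolding n_def by auto
  obtain u where u: "Rep_zp x n = p ^ k * u" using k[OF kn] by (auto elim: dvdE)
  obtain w where w: "Rep_zp y n = p ^ l * w" using l[OF ln] by (auto elim: dvdE)
  have pk: "p ^ k \<noteq> 0" "p ^ l \<noteq> 0" using pp by (auto simp: prime_gt_0_int)
  have nu: "\<not> p dvd u"
  proof
    assume "p dvd u"
    then have "p ^ k * p dvd p ^ k * u" by simp
    then show False using k[OF kn] u by (simp add: power_Suc2)
  qed
  have nw: "\<not> p dvd w"
  proof
    assume "p dvd w"
    then have "p ^ l * p dvd p ^ l * w" by simp
    then show False using l[OF ln] w by (simp add: power_Suc2)
  qed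
  show "x * y \<noteq> 0"
  proof
    assume "x * y = 0"
    then have "Rep_zp (x * y) n = 0" by (simp add: zero_zp.rep_eq)
    then have "p ^ n dvd Rep_zp x n * Rep_zp y n"
      by (simp add: times_zp.rep_eq p_def dvd_eq_mod_eq_0)
    then have d: "p ^ n dvd (p ^ k * u) * (p ^ l * w)" by (simp only: u w)
    have e1: "p ^ n = p ^ (k + l) * p" by (simp add: n_def power_Suc2)
    have e2: "(p ^ k * u) * (p ^ l * w) = p ^ (k + l) * (u * w)"
      by (simp add: power_add algebra_simps)
    have pkl: "p ^ (k + l) \<noteq> 0" using pk by (simp add: power_add)
    have "p ^ (k + l) * p dvd p ^ (k + l) * (u * w)" using d by (simp only: e1 e2)
    then have "p dvd u * w" using pkl by (simp only: dvd_mult_cancel_left) simp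
    then show False using nu nw pp by (simp add: prime_dvd_mult_iff)
  qed
qed

type_synonym 'p qp = "'p zp fract"

definition zp_to_qp :: "'p::prime_card zp \<Rightarrow> 'p qp" where
  "zp_to_qp z = Fract z 1"

definition qp_p :: "'p::prime_card qp" where
  "qp_p = of_nat CARD('p)"

definition qp_val :: "'p::prime_card qp \<Rightarrow> int" where
  "qp_val x = (THE k. \<exists>u. u dvd 1 \<and> x = zp_to_qp u * qp_p powi k)"

definition padic_abs :: "'p::prime_card qp \<Rightarrow> real" where
  "padic_abs x = (if x = 0 then 0 else real CARD('p) powi (- qp_val x))"

definition qp_star :: "'p::prime_card qp \<Rightarrow> 'p qp" where
  "qp_star c = c * qp_p powi (- qp_val c)"

text \<open>Leading digit c_0 of c* = c_0 + c_1 p + ...: the unique c_0 in {1..p-1}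
  with |c* - c_0|_p < 1.\<close>

definition qp_digit0 :: "'p::prime_card qp \<Rightarrow> nat" where
  "qp_digit0 c = (THE d. d \<in> {1..CARD('p) - 1} \<and> padic_abs (qp_star c - of_nat d) < 1)"

text \<open>log_p |c|_p = - qp_val c.\<close>

definition sqrt_exists :: "'p::prime_card qp \<Rightarrow> bool" where
  "sqrt_exists c \<longleftrightarrow> c \<noteq> 0 \<and>
     qp_digit0 c ^ ((CARD('p) - 1) div 2) mod CARD('p) = 1 \<and> even (- qp_val c)"

definition cbrt_exists :: "'p::prime_card qp \<Rightarrow> bool" where
  "cbrt_exists c \<longleftrightarrow> c \<noteq> 0 \<and>
     qp_digit0 c ^ ((CARD('p) - 1) div gcd 3 (CARD('p) - 1)) mod CARD('p) = 1 \<and>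
     (3::int) dvd (- qp_val c)"

definition Delta1 :: "('p::prime_card qp \<times> 'p qp) set" where
  "Delta1 = {(a, b). padic_abs a ^ 3 < padic_abs b ^ 2 \<and> cbrt_exists b}"

definition Delta3 :: "('p::prime_card qp \<times> 'p qp) set" where
  "Delta3 = {(a, b). padic_abs a ^ 3 > padic_abs b ^ 2}"

definition Zp_set :: "'p::prime_card qp set" where
  "Zp_set = {x. padic_abs x \<le> 1}"

definition Zp_units :: "'p::prime_card qp set" where
  "Zp_units = {x. padic_abs x = 1}"

definition cubic_poly :: "'p::prime_card qp \<Rightarrow> 'p qp \<Rightarrow> 'p qp poly" where
  "cubic_poly a b = [:- b, a, 0, 1:]"

definition root_count :: "'p::prime_card qp \<Rightarrow> 'p qp \<Rightarrow> 'p qp set \<Rightarrow> nat" where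
  "root_count a b A = (\<Sum>r \<in> {r \<in> A. poly (cubic_poly a b) r = 0}. order r (cubic_poly a b))"

text \<open>Solvable in A^[n]: exactly n roots (with multiplicity) in Q_p, all in A.\<close>

definition solvable_in :: "'p::prime_card qp \<Rightarrow> 'p qp \<Rightarrow> 'p qp set \<Rightarrow> nat \<Rightarrow> bool" where
  "solvable_in a b A n \<longleftrightarrow> root_count a b UNIV = n \<and> root_count a b A = n"

text \<open>Solvable in A^[n] disjoint-union B^[m]: exactly n roots in A and exactly m in B.\<close>

definition solvable_in2 ::
  "'p::prime_card qp \<Rightarrow> 'p qp \<Rightarrow> 'p qp set \<Rightarrow> nat \<Rightarrow> 'p qp set \<Rightarrow> nat \<Rightarrow> bool" where
  "solvable_in2 a b A n B m \<longleftrightarrow> root_count a b A = n \<and> root_count a b B = m"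

end

theory Submission
  imports Defs "HOL-Number_Theory.Number_Theory"
begin

text \<open>Write \<open>a = u p\<^sup>\<alpha>\<close> and \<open>b = w p\<^sup>\<beta>\<close> with \<open>p\<close>-adic units \<open>u\<close>, \<open>w\<close>. By the Newton polygon
  of \<open>x\<^sup>3 + a x - b\<close>, every root has valuation \<open>\<beta>/3\<close> if \<open>2\<beta> < 3\<alpha>\<close>, and valuation
  \<open>\<beta> - \<alpha>\<close> or \<open>\<alpha>/2\<close> if \<open>3\<alpha> < 2\<beta>\<close>; in either case all roots are simple. Substituting
  \<open>x = y p\<^sup>v\<close> turns the roots of valuation \<open>v\<close> into the unit roots of a cubic over \<open>\<int>\<^sub>p\<close>
  whose reduction modulo \<open>p\<close> is \<open>y\<^sup>3 = w\<close>, \<open>u y = w\<close> or \<open>y\<^sup>2 = -u\<close> respectively, and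
  by Hensel's lemma these unit roots correspond to the nonzero roots modulo \<open>p\<close>. Counting
  power residues with a primitive root gives three or one roots of valuation \<open>\<beta>/3\<close> as
  \<open>p \<equiv> 1\<close> or \<open>p \<equiv> 2 (mod 3)\<close>, one root of valuation \<open>\<beta> - \<alpha>\<close>, and two or no roots of
  valuation \<open>\<alpha>/2\<close> as \<open>-a\<close> is a square or not. Sorting the roots by the sign of their
  valuation gives the nine statements.\<close>

section \<open>The ring \<open>\<int>\<^sub>p\<close>\<close>

abbreviation zp_p :: "'p::prime_card zp" where
  "zp_p \<equiv> of_nat CARD('p)"

lemma Rep_zp_mod: "Rep_zp (x::'p::prime_card zp) n mod int CARD('p) ^ n = Rep_zp x n"
  using zp_seqs_mod[OF Rep_zp[of x]] by simp

lemma Rep_zp_bounds: "0 \<le> Rep_zp (x::'p::prime_card zp) n \<and> Rep_zp x n < int CARD('p) ^ n"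
proof -
  have "int CARD('p) ^ n > 0" using prime_card_gt1[where 'a='p] by simp
  then show ?thesis by (metis Rep_zp_mod pos_mod_bound pos_mod_sign)
qed

lemma Rep_zp_le: "m \<le> n \<Longrightarrow> Rep_zp (x::'p::prime_card zp) m = Rep_zp x n mod int CARD('p) ^ m"
  using zp_seqs_le[OF Rep_zp[of x]] by blast

lemma zp_eq_iff_Rep: "(x::'p::prime_card zp) = y \<longleftrightarrow> (\<forall>n. Rep_zp x n = Rep_zp y n)"
  by (metis Rep_zp_inject ext)

lemma Rep_zp_of_nat: "Rep_zp (of_nat k :: 'p::prime_card zp) n = int k mod int CARD('p) ^ n"
proof (induction k)
  case (Suc k)
  have "(of_nat (Suc k) :: 'p zp) = 1 + of_nat k" by simp
  with Suc show ?case by (simp only:) (simp add: plus_zp.rep_eq one_zp.rep_eq mod_simps)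
qed (simp add: zero_zp.rep_eq)

lemma Rep_zp_of_int: "Rep_zp (of_int k :: 'p::prime_card zp) n = k mod int CARD('p) ^ n"
proof (cases k rule: int_cases)
  case (neg m)
  then have "k = - int (Suc m)" by simp
  then show ?thesis by (simp add: uminus_zp.rep_eq Rep_zp_of_nat mod_simps del: of_nat_Suc)
qed (simp add: Rep_zp_of_nat)

lemma Rep_zp_power: "Rep_zp ((x::'p::prime_card zp) ^ k) n = Rep_zp x n ^ k mod int CARD('p) ^ n"
  by (induction k) (simp_all add: one_zp.rep_eq times_zp.rep_eq mod_simps)

lemma Rep_zp_diff_eq_0_iff: "Rep_zp ((x::'p::prime_card zp) - y) n = 0 \<longleftrightarrow> Rep_zp x n = Rep_zp y n"
proof -
  have "Rep_zp (x - y) n = 0 \<longleftrightarrow> int CARD('p) ^ n dvd Rep_zp x n - Rep_zp y n"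
    by (simp add: minus_zp.rep_eq dvd_eq_mod_eq_0)
  also have "\<dots> \<longleftrightarrow> Rep_zp x n mod int CARD('p) ^ n = Rep_zp y n mod int CARD('p) ^ n"
    by (simp add: mod_eq_dvd_iff)
  finally show ?thesis by (simp add: Rep_zp_mod)
qed

lemma zp_divide_by_p:
  fixes x :: "'p::prime_card zp"
  assumes "Rep_zp x 1 = 0"
  obtains y where "x = zp_p * y" and "\<And>m. Rep_zp y m = Rep_zp x (Suc m) div int CARD('p)"
proof -
  define p where "p = int CARD('p)"
  have p1: "p > 1" unfolding p_def by (rule prime_card_gt1)
  have p_dvd: "p dvd Rep_zp x m" if "m \<ge> 1" for m
    using Rep_zp_le[OF that, of x] assms by (simp add: p_def dvd_eq_mod_eq_0)
  have shift: "Rep_zp x m = p * (Rep_zp x (Suc m) div p) mod p ^ m" for m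
  proof -
    have "p * (Rep_zp x (Suc m) div p) = Rep_zp x (Suc m)" using p_dvd[of "Suc m"] by simp
    then show ?thesis using Rep_zp_le[of m "Suc m" x] by (simp add: p_def)
  qed
  define f where "f = (\<lambda>m. Rep_zp x (Suc m) div p)"
  have "f \<in> zp_seqs (int CARD('p))"
    unfolding zp_seqs_def mem_Collect_eq
  proof
    fix m
    have "p * f m = p * f (Suc m) mod (p * p ^ m)"
      using shift[of "Suc m"] by (simp add: f_def)
    also have "\<dots> = p * (f (Suc m) mod p ^ m)" by (rule mult_mod_right[symmetric])
    finally show "f m = f (Suc m) mod int CARD('p) ^ m" using p1 by (simp add: p_def)
  qed
  moreover define y :: "'p zp" where "y = Abs_zp f"
  ultimately have Rep_y: "Rep_zp y m = f m" for m
    by (simp add: Abs_zp_inverse)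
  have "Rep_zp x m = Rep_zp (zp_p * y) m" for m
    using shift[of m] by (simp add: times_zp.rep_eq Rep_zp_of_nat Rep_y f_def p_def mod_simps)
  then have "x = zp_p * y"
    unfolding zp_eq_iff_Rep by blast
  with Rep_y show ?thesis using that f_def p_def by blast
qed

lemma zp_p_power_dvd_iff: "zp_p ^ n dvd (x::'p::prime_card zp) \<longleftrightarrow> Rep_zp x n = 0"
proof
  assume "zp_p ^ n dvd x"
  then obtain y where "x = zp_p ^ n * y" by auto
  then show "Rep_zp x n = 0" by (simp add: times_zp.rep_eq Rep_zp_power Rep_zp_of_nat mod_simps)
next
  show "Rep_zp x n = 0 \<Longrightarrow> zp_p ^ n dvd x"
  proof (induction n arbitrary: x)
    case (Suc n)
    have "Rep_zp x 1 = 0" using Rep_zp_le[of 1 "Suc n" x] Suc.prems by simp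
    then obtain y where y: "x = zp_p * y" "\<And>m. Rep_zp y m = Rep_zp x (Suc m) div int CARD('p)"
      by (erule zp_divide_by_p)
    have "zp_p ^ n dvd y" using Suc y(2) by simp
    then show ?case using y(1) by simp
  qed simp
qed

lemma zp_p_power_dvd_diff_iff:
  "zp_p ^ n dvd ((x::'p::prime_card zp) - y) \<longleftrightarrow> Rep_zp x n = Rep_zp y n"
  by (simp add: zp_p_power_dvd_iff Rep_zp_diff_eq_0_iff)

lemma zp_eq_0_iff: "(x::'p::prime_card zp) = 0 \<longleftrightarrow> (\<forall>n. zp_p ^ n dvd x)"
  by (auto simp: zp_p_power_dvd_iff zp_eq_iff_Rep zero_zp.rep_eq)

lemma zp_complete:
  fixes s :: "nat \<Rightarrow> 'p::prime_card zp"
  assumes "\<And>k. zp_p ^ k dvd s (Suc k) - s k"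
  obtains L where "\<And>k. zp_p ^ k dvd L - s k"
proof -
  define f where "f = (\<lambda>n. Rep_zp (s n) n)"
  have "f \<in> zp_seqs (int CARD('p))"
    unfolding zp_seqs_def mem_Collect_eq
  proof
    fix n
    have "Rep_zp (s (Suc n)) n = Rep_zp (s n) n"
      using assms[of n] zp_p_power_dvd_diff_iff by blast
    then show "f n = f (Suc n) mod int CARD('p) ^ n"
      using Rep_zp_le[of n "Suc n" "s (Suc n)"] by (simp add: f_def)
  qed
  then have "Rep_zp (Abs_zp f :: 'p zp) k = Rep_zp (s k) k" for k
    by (simp add: Abs_zp_inverse f_def)
  then show ?thesis using that zp_p_power_dvd_diff_iff by blast
qed

lemma zp_p_nonzero: "(zp_p::'p::prime_card zp) \<noteq> 0"
proof
  assume "(zp_p::'p zp) = 0"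
  then have "Rep_zp (zp_p::'p zp) 2 = 0" by (simp add: zero_zp.rep_eq)
  then show False using prime_card_gt1[where 'a='p] by (simp add: Rep_zp_of_nat power2_eq_square)
qed

lemma zp_p_not_unit: "\<not> (zp_p::'p::prime_card zp) dvd 1"
proof
  assume "(zp_p::'p zp) dvd 1"
  then have "Rep_zp (1::'p zp) 1 = 0" using zp_p_power_dvd_iff[of 1 "1::'p zp"] by simp
  then show False using prime_card_gt1[where 'a='p] by (simp add: one_zp.rep_eq)
qed

text \<open>An element prime to \<open>p\<close> is inverted by the geometric series
  \<open>W (1 + e + e\<^sup>2 + \<dots>)\<close>, where \<open>W\<close> inverts it modulo \<open>p\<close> and \<open>e = 1 - x W\<close>.\<close>

lemma zp_unit_iff: "(x::'p::prime_card zp) dvd 1 \<longleftrightarrow> \<not> zp_p dvd x"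
proof
  assume "x dvd 1"
  then show "\<not> zp_p dvd x" using zp_p_not_unit dvd_trans by blast
next
  assume "\<not> zp_p dvd x"
  define p where "p = int CARD('p)"
  have "Rep_zp x 1 \<noteq> 0" using \<open>\<not> zp_p dvd x\<close> zp_p_power_dvd_iff[of 1 x] by simp
  moreover have "0 \<le> Rep_zp x 1" "Rep_zp x 1 < p" using Rep_zp_bounds[of x 1] by (simp_all add: p_def)
  ultimately have "\<not> p dvd Rep_zp x 1" using zdvd_not_zless by fastforce
  then have "coprime (Rep_zp x 1) p"
    using prime_card_int[where 'a='p] by (simp add: p_def prime_imp_coprime coprime_commute)
  then obtain w where w: "[Rep_zp x 1 * w = 1] (mod p)" using cong_solve_coprime_int by blast
  define W where "W = (of_int w :: 'p zp)"
  define e where "e = 1 - x * W"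
  have "zp_p dvd e"
    unfolding e_def using zp_p_power_dvd_diff_iff[of 1 "1::'p zp" "x * W"] w
    by (simp add: W_def one_zp.rep_eq times_zp.rep_eq Rep_zp_of_int p_def mod_simps cong_def)
  then have p_dvd_e: "zp_p ^ k dvd e ^ k" for k by (simp add: dvd_power_same)
  define s where "s = (\<lambda>k. W * (\<Sum>i<k. e ^ i))"
  have "s (Suc k) - s k = W * e ^ k" for k by (simp add: s_def algebra_simps)
  then have "zp_p ^ k dvd s (Suc k) - s k" for k
    using p_dvd_e[of k] by simp
  then obtain L where L: "\<And>k. zp_p ^ k dvd L - s k" using zp_complete by blast
  have xs: "x * s k = 1 - e ^ k" for k
  proof (induction k)
    case (Suc k)
    have "x * s (Suc k) = x * s k + x * W * e ^ k" by (simp add: s_def algebra_simps)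
    also have "\<dots> = 1 - e ^ k + (1 - e) * e ^ k" using Suc by (simp add: e_def)
    finally show ?case by (simp add: algebra_simps)
  qed (simp add: s_def)
  have "zp_p ^ k dvd x * L - 1" for k
  proof -
    have "x * L - 1 = x * (L - s k) - e ^ k" using xs[of k] by (simp add: algebra_simps)
    then show ?thesis by (simp add: L p_dvd_e)
  qed
  then have "x * L = 1" using zp_eq_0_iff by (metis eq_iff_diff_eq_0)
  then show "x dvd 1" by (metis dvd_triv_left)
qed

lemma zp_p_dvd_mult_iff: "zp_p dvd x * y \<longleftrightarrow> zp_p dvd x \<or> zp_p dvd (y::'p::prime_card zp)"
  using zp_unit_iff[of x] zp_unit_iff[of y] zp_unit_iff[of "x * y"] mult_dvd_mono[of x 1 y 1]
  by auto

lemma zp_unit_power_decomp: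
  fixes x :: "'p::prime_card zp"
  assumes "x \<noteq> 0"
  obtains k u where "u dvd 1" and "x = zp_p ^ k * u"
proof -
  obtain N where "\<not> zp_p ^ N dvd x" using assms zp_eq_0_iff by blast
  then obtain n where n: "\<not> zp_p ^ Suc n dvd x" "zp_p ^ n dvd x"
    using ex_least_nat_less[of "\<lambda>n. \<not> zp_p ^ n dvd x" N] by auto
  then obtain u where u: "x = zp_p ^ n * u" by auto
  have "\<not> zp_p dvd u"
    using n(1) u by (auto simp: power_Suc2 simp del: power_Suc)
  then show ?thesis using that u zp_unit_iff by blast
qed

lemma zp_unit_power_decomp_unique:
  fixes u w :: "'p::prime_card zp"
  assumes "u dvd 1" "w dvd 1" "zp_p ^ k * u = zp_p ^ l * w"
  shows "k = l \<and> u = w"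
proof -
  have less: False if "u dvd 1" "zp_p ^ k * u = zp_p ^ l * w" "k < l" for k l and u w :: "'p zp"
  proof -
    have "zp_p ^ k * u = zp_p ^ k * (zp_p ^ (l - k) * w)"
      using that(2,3) by (simp add: power_add[symmetric] mult.assoc[symmetric])
    then have "u = zp_p ^ (l - k) * w" using zp_p_nonzero by auto
    then have "zp_p dvd u" using \<open>k < l\<close> by (simp add: dvd_power)
    then show False using that(1) zp_unit_iff by blast
  qed
  have "k = l" using less[of u k l w] less[of w l k u] assms by (metis linorder_neq_iff)
  then show ?thesis using assms(3) zp_p_nonzero by auto
qed

section \<open>Residues modulo \<open>p\<close>\<close>

definition zp_residue :: "'p::prime_card zp \<Rightarrow> nat" where
  "zp_residue y = nat (Rep_zp y 1)"

lemma zp_residue_less: "zp_residue (y::'p::prime_card zp) < CARD('p)"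
  using Rep_zp_bounds[of y 1] by (simp add: zp_residue_def nat_less_iff)

lemma zp_p_dvd_diff_of_nat_iff:
  "zp_p dvd y - of_nat d \<longleftrightarrow> [d = zp_residue (y::'p::prime_card zp)] (mod CARD('p))"
proof -
  have "zp_p dvd y - of_nat d \<longleftrightarrow> Rep_zp y 1 = int d mod int CARD('p)"
    using zp_p_power_dvd_diff_iff[of 1 y "of_nat d"] by (simp add: Rep_zp_of_nat)
  also have "\<dots> \<longleftrightarrow> d mod CARD('p) = zp_residue y"
    using Rep_zp_bounds[of y 1] by (auto simp: zp_residue_def simp flip: of_nat_mod)
  also have "\<dots> \<longleftrightarrow> [d = zp_residue y] (mod CARD('p))"
    using zp_residue_less[of y] by (simp add: cong_def)
  finally show ?thesis .
qed

lemma zp_p_dvd_of_nat_diff_iff: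
  "zp_p dvd of_nat d - y \<longleftrightarrow> [d = zp_residue (y::'p::prime_card zp)] (mod CARD('p))"
  using zp_p_dvd_diff_of_nat_iff[of y d] dvd_minus_iff[of zp_p "y - of_nat d"] by simp

lemma zp_p_dvd_iff_residue: "zp_p dvd (y::'p::prime_card zp) \<longleftrightarrow> zp_residue y = 0"
  using zp_p_dvd_diff_of_nat_iff[of y 0] zp_residue_less[of y] by (auto simp: cong_def)

lemma zp_p_dvd_of_nat_iff: "(zp_p::'p::prime_card zp) dvd of_nat m \<longleftrightarrow> CARD('p) dvd m"
  using zp_p_dvd_diff_of_nat_iff[of "0::'p zp" m]
  by (simp add: zp_residue_def zero_zp.rep_eq cong_0_iff)

lemma zp_p_dvd_diff_residue: "zp_p dvd y - of_nat (zp_residue (y::'p::prime_card zp))"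
  by (simp add: zp_p_dvd_diff_of_nat_iff)

lemma zp_unit_iff_residue: "(y::'p::prime_card zp) dvd 1 \<longleftrightarrow> zp_residue y \<noteq> 0"
  by (simp add: zp_unit_iff zp_p_dvd_iff_residue)

lemma not_dvd_residue_if_unit: "(y::'p::prime_card zp) dvd 1 \<Longrightarrow> \<not> CARD('p) dvd zp_residue y"
proof
  assume "y dvd 1" "CARD('p) dvd zp_residue y"
  moreover have "zp_residue y \<noteq> 0" using \<open>y dvd 1\<close> zp_unit_iff_residue by blast
  ultimately show False using zp_residue_less[of y] by (auto dest: dvd_imp_le)
qed

section \<open>The valuation on \<open>\<rat>\<^sub>p\<close>\<close>

lemma zp_to_qp_add: "zp_to_qp (x + y) = zp_to_qp x + zp_to_qp y"
  and zp_to_qp_mult: "zp_to_qp (x * y) = zp_to_qp x * zp_to_qp y"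
  and zp_to_qp_uminus: "zp_to_qp (- x) = - zp_to_qp x"
  and zp_to_qp_diff: "zp_to_qp (x - y) = zp_to_qp x - zp_to_qp y"
  and zp_to_qp_0: "zp_to_qp 0 = 0"
  and zp_to_qp_1: "zp_to_qp 1 = 1"
  and zp_to_qp_of_nat: "zp_to_qp (of_nat n) = of_nat n"
  by (simp_all add: zp_to_qp_def Zero_fract_def One_fract_def of_nat_fract)

lemma zp_to_qp_power: "zp_to_qp (x ^ n) = zp_to_qp x ^ n"
  by (induction n) (simp_all add: zp_to_qp_1 zp_to_qp_mult)

lemma zp_to_qp_eq_iff: "zp_to_qp x = zp_to_qp y \<longleftrightarrow> x = y"
  by (simp add: zp_to_qp_def eq_fract)

lemma zp_to_qp_eq_0_iff: "zp_to_qp x = 0 \<longleftrightarrow> x = 0"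
  using zp_to_qp_eq_iff[of x 0] by (simp add: zp_to_qp_0)

lemmas zp_to_qp_hom = zp_to_qp_add zp_to_qp_mult zp_to_qp_uminus zp_to_qp_diff zp_to_qp_0
  zp_to_qp_1 zp_to_qp_of_nat zp_to_qp_power

lemma qp_p_nonzero: "(qp_p :: 'p::prime_card qp) \<noteq> 0"
  by (simp add: qp_p_def zp_to_qp_eq_0_iff zp_p_nonzero flip: zp_to_qp_of_nat)

lemma qp_p_powi_add: "(qp_p :: 'p::prime_card qp) powi (m + n) = qp_p powi m * qp_p powi n"
  by (rule power_int_add) (simp add: qp_p_nonzero)

lemma qp_p_powi_nonneg: "n \<ge> 0 \<Longrightarrow> (qp_p :: 'p::prime_card qp) powi n = zp_to_qp (zp_p ^ nat n)"
  by (simp add: power_int_def zp_to_qp_hom qp_p_def)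

lemma qp_p_powi_shift:
  "k \<le> l \<Longrightarrow> (qp_p :: 'p::prime_card qp) powi l = qp_p powi k * zp_to_qp (zp_p ^ nat (l - k))"
proof -
  assume "k \<le> l"
  have "qp_p powi l = (qp_p :: 'p qp) powi (k + (l - k))" by simp
  also have "\<dots> = qp_p powi k * qp_p powi (l - k)" by (rule qp_p_powi_add)
  also have "qp_p powi (l - k) = zp_to_qp (zp_p ^ nat (l - k))" using \<open>k \<le> l\<close> by (simp add: qp_p_powi_nonneg)
  finally show ?thesis .
qed

lemma qp_unit_power_nonzero: "(u::'p::prime_card zp) dvd 1 \<Longrightarrow> zp_to_qp u * qp_p powi k \<noteq> 0"
  using zp_p_not_unit[where 'p='p] qp_p_nonzero[where 'p='p]
  by (auto simp: zp_to_qp_eq_0_iff power_int_not_zero)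

lemma qp_unit_power_decomp:
  fixes x :: "'p::prime_card qp"
  assumes "x \<noteq> 0"
  obtains u k where "u dvd 1" and "x = zp_to_qp u * qp_p powi k"
proof -
  obtain n d where x: "x = Fract n d" and d: "d \<noteq> 0" by (cases x) auto
  have "n \<noteq> 0" using assms x by (auto simp: Zero_fract_def eq_fract)
  then obtain k u where u: "u dvd 1" "n = zp_p ^ k * u" by (rule zp_unit_power_decomp)
  obtain l w where w: "w dvd 1" "d = zp_p ^ l * w" using d by (rule zp_unit_power_decomp)
  obtain w' where w': "1 = w * w'" using w(1) by (auto elim: dvdE)
  have "x = zp_to_qp n / zp_to_qp d" using x d by (simp add: zp_to_qp_def)
  also have "\<dots> = zp_to_qp (u * w') * qp_p powi (int k - int l)"
  proof -
    have "zp_to_qp w * zp_to_qp w' = 1" by (metis w' zp_to_qp_mult zp_to_qp_1)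
    moreover have "qp_p powi (int k - int l) * qp_p powi (int l) = (qp_p::'p qp) powi (int k)"
      by (subst qp_p_powi_add[symmetric]) simp
    moreover have "zp_to_qp d \<noteq> 0" using d by (simp add: zp_to_qp_eq_0_iff)
    ultimately show ?thesis
      by (simp add: u(2) w(2) zp_to_qp_hom qp_p_def field_simps)
  qed
  moreover have "w' dvd 1" using w' by (metis dvd_triv_right)
  then have "u * w' dvd 1" using mult_dvd_mono[OF u(1)] by fastforce
  ultimately show ?thesis using that by blast
qed

lemma qp_unit_power_decomp_unique:
  fixes u w :: "'p::prime_card zp"
  assumes "u dvd 1" "w dvd 1" "zp_to_qp u * qp_p powi k = zp_to_qp w * qp_p powi l"
  shows "k = l \<and> u = w"
proof -
  have le: "k = l \<and> u = w"
    if "u dvd 1" "w dvd 1" "zp_to_qp u * qp_p powi k = zp_to_qp w * qp_p powi l" "k \<le> l"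
    for k l and u w :: "'p zp"
  proof -
    have "zp_to_qp u * qp_p powi k = (zp_to_qp (zp_p ^ nat (l - k) * w)) * qp_p powi k"
      using that(3) unfolding qp_p_powi_shift[OF that(4)] by (simp add: zp_to_qp_mult mult_ac)
    then have "u = zp_p ^ nat (l - k) * w"
      using qp_p_nonzero[where 'p='p] by (simp add: power_int_not_zero zp_to_qp_eq_iff)
    then have "zp_p ^ 0 * u = zp_p ^ nat (l - k) * w" by simp
    then show ?thesis using zp_unit_power_decomp_unique[OF that(1,2)] that(4) by fastforce
  qed
  show ?thesis using le[OF assms] le[OF assms(2,1) assms(3)[symmetric]] by linarith
qed

lemma qp_val_unit_power: "(u::'p::prime_card zp) dvd 1 \<Longrightarrow> qp_val (zp_to_qp u * qp_p powi k) = k"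
  unfolding qp_val_def by (rule the_equality) (use qp_unit_power_decomp_unique in blast)+

lemma qp_val_mult:
  fixes x y :: "'p::prime_card qp"
  assumes "x \<noteq> 0" "y \<noteq> 0"
  shows "qp_val (x * y) = qp_val x + qp_val y"
proof -
  obtain u k where u: "u dvd 1" "x = zp_to_qp u * qp_p powi k"
    using assms(1) by (rule qp_unit_power_decomp)
  obtain w l where w: "w dvd 1" "y = zp_to_qp w * qp_p powi l"
    using assms(2) by (rule qp_unit_power_decomp)
  have "x * y = zp_to_qp (u * w) * qp_p powi (k + l)"
    by (simp add: u(2) w(2) qp_p_powi_add zp_to_qp_mult mult_ac)
  moreover have "u * w dvd 1" using mult_dvd_mono[OF u(1) w(1)] by simp
  ultimately show ?thesis using u w qp_val_unit_power by metis
qed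

lemma qp_val_power: "(x::'p::prime_card qp) \<noteq> 0 \<Longrightarrow> qp_val (x ^ n) = int n * qp_val x"
proof (induction n)
  case 0
  show ?case using qp_val_unit_power[of "1::'p zp" 0] by (simp add: zp_to_qp_1)
next
  case (Suc n)
  then show ?case by (simp add: qp_val_mult algebra_simps)
qed

lemma qp_val_uminus: "qp_val (- (x::'p::prime_card qp)) = qp_val x"
proof (cases "x = 0")
  case False
  obtain u k where u: "u dvd 1" "x = zp_to_qp u * qp_p powi k"
    using False by (rule qp_unit_power_decomp)
  then have "- x = zp_to_qp (- u) * qp_p powi k" by (simp add: zp_to_qp_uminus)
  then show ?thesis using u qp_val_unit_power[of "- u"] qp_val_unit_power[of u] by simp
qed simp

lemma qp_val_1: "qp_val (1::'p::prime_card qp) = 0"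
  using qp_val_unit_power[of "1::'p zp" 0] by (simp add: zp_to_qp_1)

lemma qp_val_of_nat:
  assumes "\<not> CARD('p::prime_card) dvd n"
  shows "qp_val (of_nat n :: 'p qp) = 0 \<and> (of_nat n :: 'p qp) \<noteq> 0"
proof -
  have unit: "(of_nat n :: 'p zp) dvd 1" using assms zp_p_dvd_of_nat_iff[of n] zp_unit_iff by blast
  show ?thesis
    using qp_val_unit_power[OF unit, of 0] qp_unit_power_nonzero[OF unit, of 0]
    by (simp add: zp_to_qp_of_nat)
qed

lemma qp_val_zp_to_qp:
  fixes z :: "'p::prime_card zp"
  assumes "z \<noteq> 0"
  shows "qp_val (zp_to_qp z) \<ge> 0" and "qp_val (zp_to_qp z) = 0 \<longleftrightarrow> z dvd 1"
proof -
  obtain k u where u: "u dvd 1" "z = zp_p ^ k * u" using assms by (rule zp_unit_power_decomp)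
  then have "zp_to_qp z = zp_to_qp u * qp_p powi (int k)"
    by (simp add: zp_to_qp_hom qp_p_def mult_ac)
  then have v: "qp_val (zp_to_qp z) = int k" using qp_val_unit_power[OF u(1)] by presburger
  then show "qp_val (zp_to_qp z) \<ge> 0" by simp
  have "z dvd 1 \<longleftrightarrow> k = 0"
    using u zp_unit_iff[of z] zp_unit_iff[of u] by (cases k) (auto simp: zp_p_dvd_mult_iff)
  then show "qp_val (zp_to_qp z) = 0 \<longleftrightarrow> z dvd 1" using v by simp
qed

lemma qp_val_add:
  fixes x y :: "'p::prime_card qp"
  assumes "x \<noteq> 0" "y \<noteq> 0" "x + y \<noteq> 0"
  shows "qp_val (x + y) \<ge> min (qp_val x) (qp_val y)"
    and "qp_val x \<noteq> qp_val y \<Longrightarrow> qp_val (x + y) = min (qp_val x) (qp_val y)"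
proof -
  have le: "qp_val (x + y) \<ge> qp_val x \<and> (qp_val x < qp_val y \<longrightarrow> qp_val (x + y) = qp_val x)"
    if hyps: "x \<noteq> 0" "y \<noteq> 0" "x + y \<noteq> 0" "qp_val x \<le> qp_val y" for x y :: "'p qp"
  proof -
    obtain u k where u: "u dvd 1" "x = zp_to_qp u * qp_p powi k"
      using hyps(1) by (rule qp_unit_power_decomp)
    obtain w l where w: "w dvd 1" "y = zp_to_qp w * qp_p powi l"
      using hyps(2) by (rule qp_unit_power_decomp)
    have vx: "qp_val x = k" and vy: "qp_val y = l" using u w qp_val_unit_power by simp_all
    define z where "z = u + w * zp_p ^ nat (l - k)"
    have kl: "k \<le> l" using hyps(4) vx vy by simp
    have "x + y = zp_to_qp z * qp_p powi k"
      by (simp add: u(2) w(2) qp_p_powi_shift[OF kl] z_def zp_to_qp_hom algebra_simps)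
    moreover have z0: "z \<noteq> 0" using calculation hyps(3) by (auto simp: zp_to_qp_0)
    ultimately have vz: "qp_val (x + y) = qp_val (zp_to_qp z) + k"
      using qp_p_nonzero[where 'p='p]
      by (simp add: qp_val_mult zp_to_qp_eq_0_iff power_int_not_zero qp_val_unit_power[of 1, simplified zp_to_qp_1, simplified])
    have "z dvd 1" if "k < l"
    proof -
      have "zp_p dvd w * zp_p ^ nat (l - k)" using that by (simp add: dvd_power)
      then show ?thesis using u(1) zp_unit_iff by (metis z_def dvd_add_left_iff)
    qed
    then show ?thesis using qp_val_zp_to_qp[OF z0] vz vx vy by auto
  qed
  show "qp_val (x + y) \<ge> min (qp_val x) (qp_val y)"
    using le[OF assms] le[of y x] assms by (cases "qp_val x \<le> qp_val y") (auto simp: add.commute)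
  show "qp_val (x + y) = min (qp_val x) (qp_val y)" if "qp_val x \<noteq> qp_val y"
    using le[OF assms] le[of y x] assms that by (cases "qp_val x \<le> qp_val y") (auto simp: add.commute)
qed

lemma power_int_strict_increasing_iff:
  fixes a :: "'a::linordered_field"
  assumes "1 < a"
  shows "a powi m < a powi n \<longleftrightarrow> m < n"
  using assms power_int_strict_increasing[of m n a] power_int_strict_increasing[of n m a]
  by (metis linorder_neq_iff order_less_asym)

lemma padic_abs_nonzero: "(x::'p::prime_card qp) \<noteq> 0 \<Longrightarrow> padic_abs x = real CARD('p) powi (- qp_val x)"
  by (simp add: padic_abs_def)

lemma padic_abs_power_less_iff:
  fixes a b :: "'p::prime_card qp"
  assumes "a \<noteq> 0" "b \<noteq> 0"
  shows "padic_abs a ^ m < padic_abs b ^ n \<longleftrightarrow> int n * qp_val b < int m * qp_val a"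
proof -
  have "1 < real CARD('p)" using prime_card_gt1[where 'a='p] by simp
  then show ?thesis
    using assms power_int_strict_increasing_iff[of "real CARD('p)"]
    by (simp add: padic_abs_nonzero power_int_power' mult.commute)
qed

lemma padic_abs_less_iff:
  fixes x y :: "'p::prime_card qp"
  shows "x \<noteq> 0 \<Longrightarrow> y \<noteq> 0 \<Longrightarrow> padic_abs x < padic_abs y \<longleftrightarrow> qp_val y < qp_val x"
  using padic_abs_power_less_iff[of x y 1 1] by simp

lemma padic_abs_eq_iff:
  fixes x y :: "'p::prime_card qp"
  shows "x \<noteq> 0 \<Longrightarrow> y \<noteq> 0 \<Longrightarrow> padic_abs x = padic_abs y \<longleftrightarrow> qp_val x = qp_val y"
  using padic_abs_less_iff[of x y] padic_abs_less_iff[of y x] by (metis linorder_neq_iff)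

lemma padic_abs_1: "padic_abs (1::'p::prime_card qp) = 1"
  by (simp add: padic_abs_def qp_val_1)

lemma padic_abs_compare_1:
  fixes x :: "'p::prime_card qp"
  assumes "x \<noteq> 0"
  shows "padic_abs x = 1 \<longleftrightarrow> qp_val x = 0"
    and "padic_abs x < 1 \<longleftrightarrow> qp_val x > 0"
    and "padic_abs x > 1 \<longleftrightarrow> qp_val x < 0"
  using padic_abs_eq_iff[of x 1] padic_abs_less_iff[of x 1] padic_abs_less_iff[of 1 x] assms
  by (simp_all add: padic_abs_1 qp_val_1)

lemma mem_Zp_regions_iff:
  fixes x :: "'p::prime_card qp"
  assumes "x \<noteq> 0"
  shows "x \<in> Zp_units \<longleftrightarrow> qp_val x = 0"
    and "x \<in> Zp_set - Zp_units \<longleftrightarrow> qp_val x > 0"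
    and "x \<in> UNIV - Zp_set \<longleftrightarrow> qp_val x < 0"
  using padic_abs_compare_1[OF assms] by (auto simp: Zp_units_def Zp_set_def)

lemma Delta1_iff:
  fixes a b :: "'p::prime_card qp"
  shows "a \<noteq> 0 \<Longrightarrow> b \<noteq> 0 \<Longrightarrow>
    (a, b) \<in> Delta1 \<longleftrightarrow> 2 * qp_val b < 3 * qp_val a \<and> cbrt_exists b"
  using padic_abs_power_less_iff[of a b 3 2] by (simp add: Delta1_def)

lemma Delta3_iff:
  fixes a b :: "'p::prime_card qp"
  shows "a \<noteq> 0 \<Longrightarrow> b \<noteq> 0 \<Longrightarrow> (a, b) \<in> Delta3 \<longleftrightarrow> 3 * qp_val a < 2 * qp_val b"
  using padic_abs_power_less_iff[of b a 2 3] by (simp add: Delta3_def)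

lemma padic_abs_zp_to_qp_less_1_iff: "padic_abs (zp_to_qp z) < 1 \<longleftrightarrow> zp_p dvd (z::'p::prime_card zp)"
proof (cases "z = 0")
  case False
  then have "zp_to_qp z \<noteq> 0" by (simp add: zp_to_qp_eq_0_iff)
  then show ?thesis
    using padic_abs_compare_1(2) qp_val_zp_to_qp[OF False] zp_unit_iff[of z] by fastforce
qed (simp add: padic_abs_def zp_to_qp_0)

lemma qp_digit0_unit_power:
  assumes "(u::'p::prime_card zp) dvd 1"
  shows "qp_digit0 (zp_to_qp u * qp_p powi k) = zp_residue u"
proof -
  have "qp_star (zp_to_qp u * qp_p powi k) = zp_to_qp u"
    by (simp add: qp_star_def qp_val_unit_power[OF assms] mult.assoc flip: qp_p_powi_add)
  moreover have "padic_abs (zp_to_qp u - of_nat d) < 1 \<longleftrightarrow> [d = zp_residue u] (mod CARD('p))" for d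
    using padic_abs_zp_to_qp_less_1_iff[of "u - of_nat d"] zp_p_dvd_diff_of_nat_iff[of u d]
    by (simp add: zp_to_qp_hom)
  moreover have "zp_residue u \<noteq> 0"
    using assms zp_unit_iff zp_p_dvd_iff_residue by blast
  ultimately show ?thesis
    unfolding qp_digit0_def using zp_residue_less[of u]
    by (intro the_equality) (auto simp: cong_def)
qed

lemma sqrt_exists_uminus_iff:
  assumes "(u::'p::prime_card zp) dvd 1"
  shows "sqrt_exists (- (zp_to_qp u * qp_p powi \<alpha>)) \<longleftrightarrow>
    [zp_residue (- u) ^ ((CARD('p) - 1) div 2) = 1] (mod CARD('p)) \<and> even \<alpha>"
proof -
  have "- (zp_to_qp u * qp_p powi \<alpha>) = zp_to_qp (- u) * qp_p powi \<alpha>" by (simp add: zp_to_qp_uminus)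
  moreover have unit: "- u dvd 1" using assms by simp
  ultimately show ?thesis
    using qp_unit_power_nonzero[OF unit] qp_digit0_unit_power[OF unit] qp_val_unit_power[OF unit]
      prime_gt_1_nat[OF prime_card[where 'a='p]]
    by (simp add: sqrt_exists_def cong_def)
qed

section \<open>Power residues modulo a prime\<close>

lemma prime_mod_3_cases:
  fixes p :: nat
  assumes "prime p" "p > 3"
  shows "p mod 3 = 1 \<or> p mod 3 = 2"
proof -
  have "p mod 3 \<noteq> 0"
  proof
    assume "p mod 3 = 0"
    then have "3 dvd p" by presburger
    then have "3 = p" using primes_dvd_imp_eq[of 3 p] assms(1) by simp
    then show False using assms(2) by simp
  qed
  then show ?thesis by presburger
qed

lemma dvd_pred_if_mod_3_eq_1: "n mod 3 = 1 \<Longrightarrow> 3 dvd n - (1::nat)"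
  using mod_eq_dvd_iff_nat[of 1 n 3] by (cases "n = 0") simp_all

lemma coprime_3_pred_if_mod_3_eq_2: "n mod 3 = 2 \<Longrightarrow> coprime 3 (n - 1::nat)"
proof -
  assume "n mod 3 = 2"
  then have "n - 1 = 3 * (n div 3) + 1" using div_mult_mod_eq[of n 3] by linarith
  then have "(n - 1) mod 3 = 1" by simp
  then show ?thesis using coprime_mod_right_iff[of 3 "n - 1"] by simp
qed

lemma power_residue_if_euler_criterion:
  fixes p k b :: nat
  assumes "prime p" "k dvd p - 1" "\<not> p dvd b" "[b ^ ((p - 1) div k) = 1] (mod p)"
  obtains c where "[c ^ k = b] (mod p)"
proof -
  have p1: "p > 1" using assms(1) prime_gt_1_nat by blast
  obtain g where g: "residue_primroot p g" using prime_primitive_root_exists[OF p1 assms(1)] by blast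
  then have ord_g: "ord p g = p - 1" and "coprime p g"
    using assms(1) by (auto simp: residue_primroot_def totient_prime)
  have "coprime b p" using prime_imp_coprime_nat[OF assms(1,3)] by (simp only: coprime_commute)
  moreover have "b mod p > 0" using assms(3) by (simp add: dvd_eq_mod_eq_0 gr0I)
  ultimately have "b mod p \<in> totatives p" using p1 by (simp add: totatives_def)
  then have "b mod p \<in> (\<lambda>i. g ^ i mod p) ` {..<totient p}"
    using residue_primroot_is_generator[OF p1 g] by (simp add: bij_betw_def)
  then obtain i where "b mod p = g ^ i mod p" by blast
  then have i: "[g ^ i = b] (mod p)" by (simp add: cong_def)
  obtain q where q: "p - 1 = k * q" using assms(2) by blast
  then have "q > 0" "k > 0" using p1 by (cases q; cases k; simp)+
  then have "[b ^ q = 1] (mod p)" using assms(4) q by simp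
  then have "[g ^ (i * q) = 1] (mod p)"
    using cong_pow[OF i, of q] by (simp add: power_mult) (metis cong_trans)
  then have "k * q dvd i * q" using ord_g q ord_divides[of g "i * q" p] by simp
  then obtain j where "i = k * j" using \<open>q > 0\<close> by auto
  then have "[(g ^ j) ^ k = b] (mod p)" using i by (simp add: power_mult[symmetric] mult.commute)
  then show ?thesis by (rule that)
qed

lemma not_dvd_if_power_cong:
  fixes p k b x :: nat
  assumes "[x ^ k = b] (mod p)" "\<not> p dvd b" "k > 0"
  shows "\<not> p dvd x"
proof -
  have "\<not> p dvd x ^ k" using assms(1,2) cong_dvd_iff by blast
  then show ?thesis using assms(3) dvd_power[of k x] dvd_trans by blast
qed

lemma euler_criterion_if_power_residue:
  fixes p k b x :: nat
  assumes p: "prime p" and k: "k dvd p - 1" and b: "\<not> p dvd b" and x: "[x ^ k = b] (mod p)"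
  shows "[b ^ ((p - 1) div k) = 1] (mod p)"
proof -
  have "k > 0" using k p prime_gt_1_nat[OF p] by (cases k) auto
  then have "[x ^ (p - 1) = 1] (mod p)" using fermat_theorem[OF p not_dvd_if_power_cong[OF x b]] by blast
  moreover have "x ^ (p - 1) = (x ^ k) ^ ((p - 1) div k)" using k by (simp flip: power_mult)
  ultimately show ?thesis using cong_pow[OF x] by (metis cong_sym cong_trans)
qed

lemma root_of_unity_mod_prime_exists:
  fixes p k :: nat
  assumes p: "prime p" and k: "k dvd p - 1"
  obtains w where "coprime p w" and "ord p w = k"
proof -
  have p1: "p > 1" using p prime_gt_1_nat by blast
  obtain g where "residue_primroot p g" using prime_primitive_root_exists[OF p1 p] by blast
  then have "coprime p g" and ord_g: "ord p g = p - 1"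
    using p by (auto simp: residue_primroot_def totient_prime)
  obtain q where q: "p - 1 = k * q" using k by blast
  then have "q > 0" using p1 by (cases q) auto
  have "gcd q (p - 1) = q" using q by (simp add: gcd_nat.absorb1)
  then have "ord p (g ^ q) = k" using ord_power[OF \<open>coprime p g\<close>, of q] ord_g q \<open>q > 0\<close> by simp
  moreover have "coprime p (g ^ q)" using \<open>coprime p g\<close> by simp
  ultimately show ?thesis using that by blast
qed

text \<open>With \<open>w\<close> of order \<open>k\<close>, the residues \<open>c w\<^sup>j\<close> for \<open>j < k\<close> are distinct roots.\<close>

lemma card_power_roots_mod_prime_ge:
  fixes p k b c :: nat
  assumes p: "prime p" and k: "k dvd p - 1" and b: "\<not> p dvd b" and c: "[c ^ k = b] (mod p)"
  shows "k \<le> card {x \<in> {..<p}. [x ^ k = b] (mod p)}"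
proof -
  have p1: "p > 1" using p prime_gt_1_nat by blast
  then have "k > 0" using k by (cases k) auto
  obtain w where "coprime p w" and ord_w: "ord p w = k" using root_of_unity_mod_prime_exists[OF p k] .
  have "coprime c p"
    using prime_imp_coprime_nat[OF p not_dvd_if_power_cong[OF c b \<open>k > 0\<close>]] by (simp add: coprime_commute)
  have "(\<lambda>j. c * w ^ j mod p) ` {..<k} \<subseteq> {x \<in> {..<p}. [x ^ k = b] (mod p)}"
  proof safe
    fix j
    have "[w ^ k = 1] (mod p)" using ord_w ord_divides[of w k p] by simp
    then have "[c ^ k * (w ^ k) ^ j = b * 1 ^ j] (mod p)" using c by (intro cong_mult cong_pow)
    moreover have "(c * w ^ j) ^ k = c ^ k * (w ^ k) ^ j"
      by (simp add: power_mult_distrib flip: power_mult) (simp add: mult.commute)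
    ultimately show "[(c * w ^ j mod p) ^ k = b] (mod p)" by (simp add: cong_def power_mod)
  qed (use p1 in simp)
  moreover have "inj_on (\<lambda>j. c * w ^ j mod p) {..<k}"
  proof (rule inj_onI)
    fix i j assume "i \<in> {..<k}" "j \<in> {..<k}" "c * w ^ i mod p = c * w ^ j mod p"
    moreover from this have "w ^ i mod p = w ^ j mod p"
      using cong_mult_lcancel_nat[OF \<open>coprime c p\<close>] by (simp add: cong_def)
    ultimately show "i = j" using inj_power_mod[OF \<open>coprime p w\<close>] ord_w by (auto dest: inj_onD)
  qed
  ultimately have "card {..<k} \<le> card {x \<in> {..<p}. [x ^ k = b] (mod p)}"
    by (intro card_inj_on_le) simp_all
  then show ?thesis by simp
qed

lemma card_power_roots_mod_prime:
  fixes p k b :: nat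
  assumes p: "prime p" and k: "k dvd p - 1" and b: "\<not> p dvd b"
  shows "card {x \<in> {..<p}. [x ^ k = b] (mod p)} =
    (if [b ^ ((p - 1) div k) = 1] (mod p) then k else 0)"
proof (cases "[b ^ ((p - 1) div k) = 1] (mod p)")
  case True
  obtain c where "[c ^ k = b] (mod p)" using power_residue_if_euler_criterion[OF p k b True] .
  then have "k \<le> card {x \<in> {..<p}. [x ^ k = b] (mod p)}" by (rule card_power_roots_mod_prime_ge[OF p k b])
  moreover have "k > 0" using k p prime_gt_1_nat[OF p] by (cases k) auto
  then have "card {x \<in> {..<p}. [x ^ k = b] (mod p)} \<le> k" using p by (intro roots_mod_prime_bound)
  ultimately show ?thesis using True by simp
next
  case False
  then have "{x \<in> {..<p}. [x ^ k = b] (mod p)} = {}"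
    using euler_criterion_if_power_residue[OF p k b] by blast
  then show ?thesis using False by simp
qed

lemma card_power_roots_mod_prime_coprime:
  fixes p k b :: nat
  assumes p: "prime p" and "k > 0" and "coprime k (p - 1)" and b: "\<not> p dvd b"
  shows "card {x \<in> {..<p}. [x ^ k = b] (mod p)} = 1"
proof -
  have p1: "p > 1" using p prime_gt_1_nat by blast
  obtain u where "[k * u = 1] (mod (p - 1))"
    using cong_solve_coprime_nat[OF \<open>coprime k (p - 1)\<close>] by auto
  then have "[k * u + k * (p - 1) = 1 + 0] (mod (p - 1))" by (intro cong_add) (simp_all add: cong_0_iff)
  moreover define v where "v = u + (p - 1)"
  ultimately have "[k * v = 1] (mod (p - 1))" by (simp add: algebra_simps)
  moreover have "k * v \<noteq> 0" using \<open>k > 0\<close> p1 by (simp add: v_def)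
  ultimately obtain t where t: "k * v = 1 + t * (p - 1)"
    using cong_to_1'_nat[of "k * v" "p - 1"] by auto
  have inverse: "[(x ^ k) ^ v = x] (mod p)" if "\<not> p dvd x" for x
  proof -
    have "(x ^ k) ^ v = x ^ (1 + (p - 1) * t)" by (simp only: power_mult[symmetric] t mult.commute[of t])
    also have "\<dots> = x * (x ^ (p - 1)) ^ t" by (simp add: power_add power_mult)
    finally have "(x ^ k) ^ v = x * (x ^ (p - 1)) ^ t" .
    moreover have "[x * (x ^ (p - 1)) ^ t = x * 1 ^ t] (mod p)"
      using fermat_theorem[OF p that] by (intro cong_mult cong_pow) simp_all
    ultimately show ?thesis by simp
  qed
  define c where "c = b ^ v mod p"
  have "{x \<in> {..<p}. [x ^ k = b] (mod p)} = {c}"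
  proof safe
    fix x assume x: "x < p" "[x ^ k = b] (mod p)"
    have "\<not> p dvd x ^ k" using cong_dvd_iff[OF x(2)] b by blast
    moreover have "x dvd x ^ k" using \<open>k > 0\<close> by simp
    ultimately have "\<not> p dvd x" using dvd_trans by blast
    have "[x = (x ^ k) ^ v] (mod p)" using inverse[OF \<open>\<not> p dvd x\<close>] by (rule cong_sym)
    also have "[(x ^ k) ^ v = b ^ v] (mod p)" using x(2) by (rule cong_pow)
    finally show "x = c"
      using x(1) p1 by (simp add: c_def cong_def)
  next
    have "(b ^ v) ^ k = (b ^ k) ^ v" by (metis power_mult mult.commute)
    then have "[(b ^ v) ^ k = (b ^ k) ^ v] (mod p)" by simp
    also have "[(b ^ k) ^ v = b] (mod p)" using inverse[OF b] .
    finally show "[c ^ k = b] (mod p)" by (simp add: c_def cong_def power_mod)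
  qed (use p1 in \<open>simp add: c_def\<close>)
  then show ?thesis by simp
qed

lemma card_linear_roots_mod_prime:
  fixes p a b :: nat
  assumes p: "prime p" and a: "\<not> p dvd a"
  shows "card {x \<in> {..<p}. [a * x = b] (mod p)} = 1"
proof -
  have "coprime a p" using prime_imp_coprime_nat[OF p a] by (simp only: coprime_commute)
  then have "\<exists>!x. x < p \<and> [a * x = b] (mod p)"
    using p by (intro cong_solve_unique) (auto dest: prime_gt_0_nat)
  then obtain x where "x < p \<and> [a * x = b] (mod p)" "\<And>y. y < p \<and> [a * y = b] (mod p) \<Longrightarrow> y = x"
    by blast
  then have "{x \<in> {..<p}. [a * x = b] (mod p)} = {x}" by blast
  then show ?thesis by simp
qed

lemma card_cube_roots_mod_prime:
  fixes p b :: nat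
  assumes p: "prime p" "p > 3" and b: "\<not> p dvd b"
    and residue: "p mod 3 = 1 \<Longrightarrow> [b ^ ((p - 1) div 3) = 1] (mod p)"
  shows "card {x \<in> {..<p}. [x ^ 3 = b] (mod p)} = (if p mod 3 = 1 then 3 else 1)"
proof -
  consider "p mod 3 = 1" | "p mod 3 = 2" using prime_mod_3_cases[OF p] by blast
  then show ?thesis
  proof cases
    case 1
    then show ?thesis
      using card_power_roots_mod_prime[OF p(1) dvd_pred_if_mod_3_eq_1 b] residue by simp
  next
    case 2
    then show ?thesis
      using card_power_roots_mod_prime_coprime[OF p(1) _ coprime_3_pred_if_mod_3_eq_2 b] by simp
  qed
qed

lemma card_square_roots_mod_prime:
  fixes p b :: nat
  assumes p: "prime p" "p > 2" and b: "\<not> p dvd b"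
  shows "card {x \<in> {..<p}. [x\<^sup>2 = b] (mod p)} = (if [b ^ ((p - 1) div 2) = 1] (mod p) then 2 else 0)"
proof (rule card_power_roots_mod_prime[OF p(1) _ b])
  show "2 dvd p - 1" using p prime_odd_nat[OF p(1)] by (simp add: dvd_diff_nat odd_pos)
qed

section \<open>Hensel's lemma for cubics over \<open>\<int>\<^sub>p\<close>\<close>

lemma dvd_iff_if_dvd_diff: "a dvd x - y \<Longrightarrow> a dvd x \<longleftrightarrow> a dvd (y::'a::comm_ring_1)"
  using dvd_diff[of a x "x - y"] dvd_add[of a "x - y" y] by auto

definition cubic_zp :: "'p::prime_card zp \<Rightarrow> 'p zp \<Rightarrow> 'p zp \<Rightarrow> 'p zp \<Rightarrow> 'p zp" where
  "cubic_zp C A B y = C * y ^ 3 + A * y - B"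

definition cubic_zp_deriv :: "'p::prime_card zp \<Rightarrow> 'p zp \<Rightarrow> 'p zp \<Rightarrow> 'p zp" where
  "cubic_zp_deriv C A y = 3 * C * y ^ 2 + A"

definition unit_roots :: "'p::prime_card zp \<Rightarrow> 'p zp \<Rightarrow> 'p zp \<Rightarrow> 'p zp set" where
  "unit_roots C A B = {y. y dvd 1 \<and> cubic_zp C A B y = 0}"

lemma cubic_zp_diff:
  "cubic_zp C A B x - cubic_zp C A B y = (x - y) * (C * (x\<^sup>2 + x * y + y\<^sup>2) + A)"
  by (simp add: cubic_zp_def algebra_simps power2_eq_square power3_eq_cube)

lemma cubic_zp_deriv_diff: "cubic_zp_deriv C A x - cubic_zp_deriv C A y = (x - y) * (3 * C * (x + y))"
  by (simp add: cubic_zp_deriv_def algebra_simps power2_eq_square)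

lemma cubic_zp_taylor:
  "cubic_zp C A B (y - h) = cubic_zp C A B y - h * cubic_zp_deriv C A y + h\<^sup>2 * (3 * C * y - C * h)"
  by (simp add: cubic_zp_def cubic_zp_deriv_def algebra_simps power2_eq_square power3_eq_cube)

lemma zp_p_dvd_cubic_zp_diff:
  "zp_p dvd x - y \<Longrightarrow> zp_p dvd cubic_zp C A B x - cubic_zp C A B (y::'p::prime_card zp)"
  by (simp add: cubic_zp_diff)

lemma zp_p_dvd_cubic_zp_deriv_diff:
  "zp_p dvd x - y \<Longrightarrow> zp_p dvd cubic_zp_deriv C A x - cubic_zp_deriv C A (y::'p::prime_card zp)"
  by (simp add: cubic_zp_deriv_diff)

text \<open>One step of Newton's iteration \<open>y \<mapsto> y - w f y\<close>, with \<open>w\<close> the inverse of \<open>f' y\<^sub>0\<close>, gains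
  one \<open>p\<close>-adic digit: \<open>f (y - h) = f y (1 - w f' y) + h\<^sup>2 (\<dots>)\<close> for \<open>h = w f y\<close>, and
  \<open>1 - w f' y = w (f' y\<^sub>0 - f' y)\<close> is divisible by \<open>p\<close>.\<close>

lemma cubic_zp_newton_step:
  fixes C A B y y0 w :: "'p::prime_card zp"
  assumes e: "zp_p ^ Suc k dvd cubic_zp C A B y" and close: "zp_p dvd y - y0"
    and w: "cubic_zp_deriv C A y0 * w = 1"
  shows "zp_p ^ Suc (Suc k) dvd cubic_zp C A B (y - w * cubic_zp C A B y)"
    and "zp_p dvd (y - w * cubic_zp C A B y) - y0"
proof -
  define e where "e = cubic_zp C A B y"
  have "zp_p dvd e" using assms(1) dvd_power[of "Suc k" "zp_p::'p zp"] dvd_trans by (auto simp: e_def)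
  have "1 - w * cubic_zp_deriv C A y = w * (cubic_zp_deriv C A y0 - cubic_zp_deriv C A y)"
    using w by (simp add: right_diff_distrib mult.commute)
  moreover have "zp_p dvd cubic_zp_deriv C A y0 - cubic_zp_deriv C A y"
    using close dvd_minus_iff[of zp_p "y - y0"] by (intro zp_p_dvd_cubic_zp_deriv_diff) simp
  ultimately have "zp_p dvd (1 - w * cubic_zp_deriv C A y) + w\<^sup>2 * e * (3 * C * y - C * w * e)"
    using \<open>zp_p dvd e\<close> by simp
  moreover have "cubic_zp C A B (y - w * e) = e * ((1 - w * cubic_zp_deriv C A y) + w\<^sup>2 * e * (3 * C * y - C * w * e))"
    using cubic_zp_taylor[of C A B y "w * e"] by (simp add: e_def algebra_simps power2_eq_square)
  ultimately have "zp_p ^ Suc k * zp_p dvd cubic_zp C A B (y - w * e)"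
    using assms(1) by (simp add: e_def mult_dvd_mono)
  then show "zp_p ^ Suc (Suc k) dvd cubic_zp C A B (y - w * cubic_zp C A B y)"
    by (simp only: e_def power_Suc2[of zp_p "Suc k"])
  have "zp_p dvd (y - y0) - w * e" using dvd_diff[OF close dvd_mult[OF \<open>zp_p dvd e\<close>]] .
  then show "zp_p dvd (y - w * cubic_zp C A B y) - y0" by (simp add: e_def algebra_simps)
qed

lemma hensel_lift:
  fixes C A B y0 :: "'p::prime_card zp"
  assumes root: "zp_p dvd cubic_zp C A B y0" and simple: "\<not> zp_p dvd cubic_zp_deriv C A y0"
  obtains y where "cubic_zp C A B y = 0" and "zp_p dvd y - y0"
proof -
  obtain w where w: "1 = cubic_zp_deriv C A y0 * w" using simple zp_unit_iff by blast
  define f where "f = cubic_zp C A B"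
  define s where "s = rec_nat y0 (\<lambda>_ y. y - w * f y)"
  have s_0: "s 0 = y0" and s_Suc: "s (Suc k) = s k - w * f (s k)" for k
    by (simp_all add: s_def)
  have approx: "zp_p ^ Suc k dvd f (s k) \<and> zp_p dvd s k - y0" for k
  proof (induction k)
    case 0
    show ?case using root by (simp add: s_0 f_def)
  next
    case (Suc k)
    then show ?case using cubic_zp_newton_step[of k C A B "s k" y0 w] w by (simp add: s_Suc f_def)
  qed
  then have "zp_p ^ k dvd f (s k)" for k
    using dvd_mult_left[of "zp_p ^ k" zp_p "f (s k)"] by (simp add: power_Suc2 del: power_Suc)
  then have "zp_p ^ k dvd s (Suc k) - s k" for k by (simp add: s_Suc)
  then obtain L where L: "\<And>k. zp_p ^ k dvd L - s k" using zp_complete by blast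
  have "zp_p ^ k dvd f L" for k
  proof -
    have "zp_p ^ k dvd f L - f (s k)" using L[of k] by (simp add: f_def cubic_zp_diff)
    then have "zp_p ^ k dvd (f L - f (s k)) + f (s k)" using \<open>zp_p ^ k dvd f (s k)\<close> by (rule dvd_add)
    then show ?thesis by simp
  qed
  then have "f L = 0" using zp_eq_0_iff by blast
  moreover have "zp_p dvd (L - s 1) + (s 1 - y0)" using L[of 1] approx[of 1] by (intro dvd_add) simp_all
  ultimately show ?thesis using that f_def by simp
qed

lemma hensel_unique:
  fixes C A B r s :: "'p::prime_card zp"
  assumes "cubic_zp C A B r = 0" "cubic_zp C A B s = 0" "zp_p dvd r - s"
    and "\<not> zp_p dvd cubic_zp_deriv C A r"
  shows "r = s"
proof -
  define X where "X = C * (r\<^sup>2 + r * s + s\<^sup>2) + A"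
  have "(r - s) * X = 0" using cubic_zp_diff[of C A B r s] assms(1,2) by (simp add: X_def)
  moreover have "X - cubic_zp_deriv C A r = - ((r - s) * (C * (s + 2 * r)))"
    by (simp add: X_def cubic_zp_deriv_def algebra_simps power2_eq_square)
  then have "zp_p dvd X - cubic_zp_deriv C A r" using assms(3) by simp
  then have "X \<noteq> 0" using assms(4) by auto
  ultimately show ?thesis by simp
qed

lemma bij_betw_unit_roots_residues:
  fixes C A B :: "'p::prime_card zp"
  assumes simple: "\<And>d. 0 < d \<Longrightarrow> d < CARD('p) \<Longrightarrow> zp_p dvd cubic_zp C A B (of_nat d) \<Longrightarrow>
      \<not> zp_p dvd cubic_zp_deriv C A (of_nat d)"
  shows "bij_betw zp_residue (unit_roots C A B)
    {d \<in> {0<..<CARD('p)}. zp_p dvd cubic_zp C A B (of_nat d)}"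
proof -
  have reduce: "zp_p dvd cubic_zp C A B (of_nat (zp_residue r))"
    and simple_root: "\<not> zp_p dvd cubic_zp_deriv C A r"
    if "r \<in> unit_roots C A B" for r
  proof -
    have r: "r dvd 1" "cubic_zp C A B r = 0" using that by (simp_all add: unit_roots_def)
    have "zp_p dvd cubic_zp C A B r - cubic_zp C A B (of_nat (zp_residue r))"
      by (rule zp_p_dvd_cubic_zp_diff[OF zp_p_dvd_diff_residue])
    then show root: "zp_p dvd cubic_zp C A B (of_nat (zp_residue r))" using r(2) by simp
    have "zp_p dvd cubic_zp_deriv C A r - cubic_zp_deriv C A (of_nat (zp_residue r))"
      by (rule zp_p_dvd_cubic_zp_deriv_diff[OF zp_p_dvd_diff_residue])
    moreover have "zp_residue r > 0" using r(1) zp_unit_iff_residue by blast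
    then have "\<not> zp_p dvd cubic_zp_deriv C A (of_nat (zp_residue r))"
      using simple[OF _ zp_residue_less root] by blast
    ultimately show "\<not> zp_p dvd cubic_zp_deriv C A r" using dvd_iff_if_dvd_diff by blast
  qed
  show ?thesis
    unfolding bij_betw_def
  proof (intro conjI inj_onI equalityI subsetI)
    fix r s assume r: "r \<in> unit_roots C A B" and s: "s \<in> unit_roots C A B"
      and "zp_residue r = zp_residue s"
    have "zp_p dvd (r - of_nat (zp_residue r)) - (s - of_nat (zp_residue s))"
      by (rule dvd_diff[OF zp_p_dvd_diff_residue zp_p_dvd_diff_residue])
    then have "zp_p dvd r - s" using \<open>zp_residue r = zp_residue s\<close> by simp
    moreover have "cubic_zp C A B r = 0" "cubic_zp C A B s = 0"
      using r s by (simp_all add: unit_roots_def)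
    ultimately show "r = s" using hensel_unique simple_root[OF r] by blast
  next
    fix d assume "d \<in> zp_residue ` unit_roots C A B"
    then show "d \<in> {d \<in> {0<..<CARD('p)}. zp_p dvd cubic_zp C A B (of_nat d)}"
      using reduce zp_residue_less zp_unit_iff_residue by (auto simp: unit_roots_def)
  next
    fix d assume d: "d \<in> {d \<in> {0<..<CARD('p)}. zp_p dvd cubic_zp C A B (of_nat d)}"
    then have "0 < d" "d < CARD('p)" "zp_p dvd cubic_zp C A B (of_nat d)" by simp_all
    then obtain r where r: "cubic_zp C A B r = 0" "zp_p dvd r - of_nat d"
      using simple hensel_lift by blast
    then have "zp_residue r = d"
      using \<open>d < CARD('p)\<close> zp_residue_less[of r] by (simp add: zp_p_dvd_diff_of_nat_iff cong_def)
    then have "r \<in> unit_roots C A B" using r d by (simp add: unit_roots_def zp_unit_iff_residue)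
    then show "d \<in> zp_residue ` unit_roots C A B" using \<open>zp_residue r = d\<close> by blast
  qed
qed

corollary card_unit_roots_eq:
  fixes C A B :: "'p::prime_card zp"
  assumes "\<And>d. 0 < d \<Longrightarrow> d < CARD('p) \<Longrightarrow> zp_p dvd cubic_zp C A B (of_nat d) \<Longrightarrow>
      \<not> zp_p dvd cubic_zp_deriv C A (of_nat d)"
  shows "card (unit_roots C A B) = card {d \<in> {0<..<CARD('p)}. zp_p dvd cubic_zp C A B (of_nat d)}"
  using bij_betw_same_card[OF bij_betw_unit_roots_residues[OF assms]] .

lemma nonzero_roots_mod_eq:
  fixes B :: "'p::prime_card zp"
  assumes "B dvd 1" and roots: "\<And>d. 0 < d \<Longrightarrow> d < CARD('p) \<Longrightarrow> P d \<longleftrightarrow> [f d = zp_residue B] (mod CARD('p))"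
    and "f 0 = 0"
  shows "{d \<in> {0<..<CARD('p)}. P d} = {x \<in> {..<CARD('p)}. [f x = zp_residue B] (mod CARD('p))}"
proof -
  have "zp_residue B \<noteq> 0" using assms(1) zp_unit_iff_residue by blast
  then have "\<not> [0 = zp_residue B] (mod CARD('p))" using zp_residue_less[of B] by (simp add: cong_def)
  then have "x \<noteq> 0" if "[f x = zp_residue B] (mod CARD('p))" for x
    using that \<open>f 0 = 0\<close> by (cases "x = 0") simp_all
  then show ?thesis using roots by auto
qed

lemma card_unit_roots_cube:
  fixes A B :: "'p::prime_card zp"
  assumes p3: "CARD('p) > 3" and A: "zp_p dvd A" and B: "B dvd 1"
  shows "card (unit_roots 1 A B) = card {x \<in> {..<CARD('p)}. [x ^ 3 = zp_residue B] (mod CARD('p))}"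
proof -
  have root_iff: "zp_p dvd cubic_zp 1 A B (of_nat d) \<longleftrightarrow> [d ^ 3 = zp_residue B] (mod CARD('p))" for d
  proof -
    have "cubic_zp 1 A B (of_nat d) = (of_nat (d ^ 3) - B) + A * of_nat d" by (simp add: cubic_zp_def)
    then show ?thesis using A zp_p_dvd_of_nat_diff_iff[of "d ^ 3" B] by (simp add: dvd_add_left_iff)
  qed
  have "\<not> zp_p dvd cubic_zp_deriv 1 A (of_nat d)"
    if "0 < d" "d < CARD('p)" "zp_p dvd cubic_zp 1 A B (of_nat d)" for d
  proof
    assume "zp_p dvd cubic_zp_deriv 1 A (of_nat d)"
    then have "zp_p dvd (of_nat (3 * d\<^sup>2) :: 'p zp)"
      using A by (simp add: cubic_zp_deriv_def dvd_add_left_iff)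
    then have "CARD('p) dvd 3 * d\<^sup>2" by (simp only: zp_p_dvd_of_nat_iff)
    then have "CARD('p) dvd 3 \<or> CARD('p) dvd d"
      using prime_card[where 'a='p] by (auto simp: prime_dvd_mult_iff dest: prime_dvd_power)
    then show False using that p3 by (auto dest: dvd_imp_le)
  qed
  then have "card (unit_roots 1 A B) = card {d \<in> {0<..<CARD('p)}. zp_p dvd cubic_zp 1 A B (of_nat d)}"
    by (rule card_unit_roots_eq)
  also have "\<dots> = card {x \<in> {..<CARD('p)}. [x ^ 3 = zp_residue B] (mod CARD('p))}"
    using B root_iff by (subst nonzero_roots_mod_eq[where f="\<lambda>x. x ^ 3"]) simp_all
  finally show ?thesis .
qed

lemma card_unit_roots_linear:
  fixes C A B :: "'p::prime_card zp"
  assumes C: "zp_p dvd C" and A: "A dvd 1" and B: "B dvd 1"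
  shows "card (unit_roots C A B) =
    card {x \<in> {..<CARD('p)}. [zp_residue A * x = zp_residue B] (mod CARD('p))}"
proof -
  have root_iff: "zp_p dvd cubic_zp C A B (of_nat d) \<longleftrightarrow>
      [zp_residue A * d = zp_residue B] (mod CARD('p))" for d
  proof -
    have "cubic_zp C A B (of_nat d) =
        (of_nat (zp_residue A * d) - B) + ((A - of_nat (zp_residue A)) * of_nat d + C * of_nat d ^ 3)"
      by (simp add: cubic_zp_def algebra_simps)
    moreover have "zp_p dvd (A - of_nat (zp_residue A)) * of_nat d + C * of_nat d ^ 3"
      using C zp_p_dvd_diff_residue[of A] by simp
    ultimately show ?thesis by (simp add: dvd_add_left_iff zp_p_dvd_of_nat_diff_iff del: of_nat_mult)
  qed
  have "\<not> zp_p dvd cubic_zp_deriv C A (of_nat d)" for d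
  proof
    assume "zp_p dvd cubic_zp_deriv C A (of_nat d)"
    then have "zp_p dvd A" using C by (simp add: cubic_zp_deriv_def dvd_add_right_iff)
    then show False using A zp_unit_iff by blast
  qed
  then have "card (unit_roots C A B) = card {d \<in> {0<..<CARD('p)}. zp_p dvd cubic_zp C A B (of_nat d)}"
    by (intro card_unit_roots_eq)
  also have "\<dots> = card {x \<in> {..<CARD('p)}. [zp_residue A * x = zp_residue B] (mod CARD('p))}"
    using B root_iff by (subst nonzero_roots_mod_eq[where f="\<lambda>x. zp_residue A * x"]) simp_all
  finally show ?thesis .
qed

lemma card_unit_roots_quadratic:
  fixes A B :: "'p::prime_card zp"
  assumes p3: "CARD('p) > 3" and A: "A dvd 1" and B: "zp_p dvd B"
  shows "card (unit_roots 1 A B) = card {x \<in> {..<CARD('p)}. [x\<^sup>2 = zp_residue (- A)] (mod CARD('p))}"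
proof -
  have root_iff: "zp_p dvd cubic_zp 1 A B (of_nat d) \<longleftrightarrow> zp_p dvd of_nat d ^ 2 + A"
    if "0 < d" "d < CARD('p)" for d
  proof -
    have "cubic_zp 1 A B (of_nat d) - of_nat d * (of_nat d ^ 2 + A) = - B"
      by (simp add: cubic_zp_def algebra_simps power2_eq_square power3_eq_cube)
    then have "zp_p dvd cubic_zp 1 A B (of_nat d) \<longleftrightarrow> zp_p dvd of_nat d * (of_nat d ^ 2 + A)"
      using B by (intro dvd_iff_if_dvd_diff) simp
    moreover have "\<not> zp_p dvd (of_nat d :: 'p zp)"
      using that by (auto simp: zp_p_dvd_of_nat_iff dest: dvd_imp_le)
    ultimately show ?thesis by (simp add: zp_p_dvd_mult_iff)
  qed
  have "\<not> zp_p dvd cubic_zp_deriv 1 A (of_nat d)"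
    if "0 < d" "d < CARD('p)" "zp_p dvd cubic_zp 1 A B (of_nat d)" for d
  proof
    assume deriv: "zp_p dvd cubic_zp_deriv 1 A (of_nat d)"
    have "zp_p dvd 3 * (of_nat d ^ 2 + A)" using root_iff that by (simp only: dvd_mult)
    then have "zp_p dvd 3 * (of_nat d ^ 2 + A) - cubic_zp_deriv 1 A (of_nat d)"
      using deriv by (rule dvd_diff)
    then have "zp_p dvd (of_nat 2 :: 'p zp) * A" by (simp add: cubic_zp_deriv_def algebra_simps)
    then show False
      using A p3 zp_p_dvd_of_nat_iff[of 2, where 'p='p]
      by (auto simp: zp_p_dvd_mult_iff zp_unit_iff dest: dvd_imp_le)
  qed
  then have "card (unit_roots 1 A B) = card {d \<in> {0<..<CARD('p)}. zp_p dvd cubic_zp 1 A B (of_nat d)}"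
    by (intro card_unit_roots_eq)
  also have "\<dots> = card {x \<in> {..<CARD('p)}. [x\<^sup>2 = zp_residue (- A)] (mod CARD('p))}"
  proof (subst nonzero_roots_mod_eq[where f="\<lambda>x. x\<^sup>2"])
    show "- A dvd 1" using A by simp
    fix d assume "0 < d" "d < CARD('p)"
    then show "zp_p dvd cubic_zp 1 A B (of_nat d) \<longleftrightarrow> [d\<^sup>2 = zp_residue (- A)] (mod CARD('p))"
      using root_iff zp_p_dvd_of_nat_diff_iff[of "d\<^sup>2" "- A"] by simp
  qed simp_all
  finally show ?thesis .
qed

section \<open>The roots of \<open>x\<^sup>3 + a x - b\<close>\<close>

lemma poly_cubic_poly: "poly (cubic_poly a b) x = x ^ 3 + a * x - b"
  by (simp add: cubic_poly_def algebra_simps power3_eq_cube)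

text \<open>Substituting \<open>x = y p\<^sup>\<xi>\<close> and dividing by \<open>p\<^sup>t\<close> turns \<open>x\<^sup>3 + a x - b\<close> into a cubic over
  \<open>\<int>\<^sub>p\<close>, provided \<open>t\<close> is at most the valuation of each of the three terms.\<close>

lemma poly_cubic_poly_scaled:
  fixes ua ub y :: "'p::prime_card zp"
  assumes a: "a = zp_to_qp ua * qp_p powi \<alpha>" and b: "b = zp_to_qp ub * qp_p powi \<beta>"
    and t: "t \<le> 3 * \<xi>" "t \<le> \<alpha> + \<xi>" "t \<le> \<beta>"
  shows "poly (cubic_poly a b) (zp_to_qp y * qp_p powi \<xi>) = qp_p powi t *
    zp_to_qp (cubic_zp (zp_p ^ nat (3 * \<xi> - t)) (ua * zp_p ^ nat (\<alpha> + \<xi> - t)) (ub * zp_p ^ nat (\<beta> - t)) y)"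
proof -
  have "(zp_to_qp y * qp_p powi \<xi>) ^ 3 = zp_to_qp (y ^ 3) * (qp_p :: 'p qp) powi (3 * \<xi>)"
    by (simp add: power_mult_distrib power_int_power' zp_to_qp_power mult.commute)
  also have "\<dots> = qp_p powi t * zp_to_qp (zp_p ^ nat (3 * \<xi> - t) * y ^ 3)"
    unfolding qp_p_powi_shift[OF t(1)] by (simp add: zp_to_qp_mult mult_ac)
  finally have x3: "(zp_to_qp y * qp_p powi \<xi>) ^ 3 = qp_p powi t * zp_to_qp (zp_p ^ nat (3 * \<xi> - t) * y ^ 3)" .
  have "a * (zp_to_qp y * qp_p powi \<xi>) = zp_to_qp (ua * y) * (qp_p :: 'p qp) powi (\<alpha> + \<xi>)"
    by (simp add: a qp_p_powi_add zp_to_qp_mult mult_ac)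
  also have "\<dots> = qp_p powi t * zp_to_qp (ua * zp_p ^ nat (\<alpha> + \<xi> - t) * y)"
    unfolding qp_p_powi_shift[OF t(2)] by (simp add: zp_to_qp_mult mult_ac)
  finally have ax: "a * (zp_to_qp y * qp_p powi \<xi>) =
      qp_p powi t * zp_to_qp (ua * zp_p ^ nat (\<alpha> + \<xi> - t) * y)" .
  have b': "b = qp_p powi t * zp_to_qp (ub * zp_p ^ nat (\<beta> - t))"
    by (simp add: b qp_p_powi_shift[OF t(3)] zp_to_qp_mult mult_ac)
  show ?thesis
    unfolding poly_cubic_poly x3 ax b' by (simp add: cubic_zp_def zp_to_qp_hom algebra_simps)
qed

definition roots_of_val :: "'p::prime_card qp \<Rightarrow> 'p qp \<Rightarrow> int \<Rightarrow> 'p qp set" where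
  "roots_of_val a b \<xi> = {x. poly (cubic_poly a b) x = 0 \<and> x \<noteq> 0 \<and> qp_val x = \<xi>}"

lemma card_roots_of_val:
  fixes ua ub :: "'p::prime_card zp"
  assumes a: "a = zp_to_qp ua * qp_p powi \<alpha>" and b: "b = zp_to_qp ub * qp_p powi \<beta>"
    and t: "t \<le> 3 * \<xi>" "t \<le> \<alpha> + \<xi>" "t \<le> \<beta>"
  shows "card (roots_of_val a b \<xi>) =
    card (unit_roots (zp_p ^ nat (3 * \<xi> - t)) (ua * zp_p ^ nat (\<alpha> + \<xi> - t)) (ub * zp_p ^ nat (\<beta> - t)))"
proof -
  define U where "U = unit_roots (zp_p ^ nat (3 * \<xi> - t)) (ua * zp_p ^ nat (\<alpha> + \<xi> - t)) (ub * zp_p ^ nat (\<beta> - t))"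
  define scale where "scale = (\<lambda>y. zp_to_qp y * (qp_p :: 'p qp) powi \<xi>)"
  have root_iff: "poly (cubic_poly a b) (scale y) = 0 \<longleftrightarrow>
      cubic_zp (zp_p ^ nat (3 * \<xi> - t)) (ua * zp_p ^ nat (\<alpha> + \<xi> - t)) (ub * zp_p ^ nat (\<beta> - t)) y = 0" for y
    using qp_p_nonzero[where 'p='p]
    by (simp add: scale_def poly_cubic_poly_scaled[OF a b t] power_int_not_zero zp_to_qp_eq_0_iff)
  have "roots_of_val a b \<xi> = scale ` U"
  proof (intro equalityI subsetI)
    fix x assume "x \<in> roots_of_val a b \<xi>"
    then have x: "poly (cubic_poly a b) x = 0" "x \<noteq> 0" "qp_val x = \<xi>" by (simp_all add: roots_of_val_def)
    obtain u k where u: "u dvd 1" "x = zp_to_qp u * qp_p powi k" using x(2) by (rule qp_unit_power_decomp)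
    moreover have "k = \<xi>" using x(3) qp_val_unit_power[OF u(1)] by (simp add: u(2))
    ultimately have "x = scale u" by (simp add: scale_def)
    then show "x \<in> scale ` U" using x(1) u(1) root_iff by (auto simp: U_def unit_roots_def)
  next
    fix x assume "x \<in> scale ` U"
    then obtain y where "y dvd 1" "x = scale y" "poly (cubic_poly a b) x = 0"
      using root_iff by (auto simp: U_def unit_roots_def)
    then show "x \<in> roots_of_val a b \<xi>"
      using qp_unit_power_nonzero[of y \<xi>] qp_val_unit_power[of y \<xi>]
      by (simp add: roots_of_val_def scale_def)
  qed
  moreover have "inj_on scale U"
  proof (rule inj_onI)
    fix x y assume "x \<in> U" "y \<in> U" "scale x = scale y"
    then show "x = y"
      using qp_unit_power_decomp_unique[of x y \<xi> \<xi>] by (simp add: scale_def U_def unit_roots_def)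
  qed
  ultimately show ?thesis by (simp add: card_image U_def)
qed

text \<open>The Newton polygon of \<open>x\<^sup>3 + a x - b\<close>: the two smallest of the valuations
  \<open>3 v(x)\<close>, \<open>v(a) + v(x)\<close>, \<open>v(b)\<close> coincide.\<close>

lemma qp_val_cubic_root:
  fixes a b x :: "'p::prime_card qp"
  assumes "a \<noteq> 0" "b \<noteq> 0" and root: "poly (cubic_poly a b) x = 0"
  shows "x \<noteq> 0"
    and "qp_val b \<ge> min (3 * qp_val x) (qp_val a + qp_val x)"
    and "3 * qp_val x \<noteq> qp_val a + qp_val x \<Longrightarrow> qp_val b = min (3 * qp_val x) (qp_val a + qp_val x)"
proof -
  show "x \<noteq> 0" using root assms(2) by (auto simp: poly_cubic_poly)
  then have "x ^ 3 \<noteq> 0" "a * x \<noteq> 0" "x ^ 3 + a * x = b"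
    using assms root by (simp_all add: poly_cubic_poly)
  moreover have "qp_val (x ^ 3) = 3 * qp_val x" "qp_val (a * x) = qp_val a + qp_val x"
    using \<open>x \<noteq> 0\<close> assms(1) by (simp_all add: qp_val_power qp_val_mult)
  ultimately show "qp_val b \<ge> min (3 * qp_val x) (qp_val a + qp_val x)"
    and "3 * qp_val x \<noteq> qp_val a + qp_val x \<Longrightarrow> qp_val b = min (3 * qp_val x) (qp_val a + qp_val x)"
    using qp_val_add[of "x ^ 3" "a * x"] assms(2) by auto
qed

lemma order_eq_1_if_pderiv_nonzero:
  fixes p :: "'a::idom poly"
  assumes "poly p r = 0" and "poly (pderiv p) r \<noteq> 0"
  shows "Polynomial.order r p = 1"
proof -
  have "p \<noteq> 0" using assms(2) by auto
  then have "Polynomial.order r p \<noteq> 0" using assms(1) order_root by blast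
  moreover have "\<not> [:-r, 1:] ^ 2 dvd p"
  proof
    assume "[:-r, 1:] ^ 2 dvd p"
    then obtain q where q: "p = [:-r, 1:] ^ Suc (Suc 0) * q" by (auto simp: numeral_2_eq_2)
    have "pderiv p = [:-r, 1:] ^ Suc (Suc 0) * pderiv q + q * pderiv ([:-r, 1:] ^ Suc (Suc 0))"
      unfolding q by (rule pderiv_mult)
    moreover have "pderiv ([:-r, 1:] ^ Suc (Suc 0)) =
        Polynomial.smult (of_nat (Suc (Suc 0))) ([:-r, 1:] ^ Suc 0) * pderiv [:-r, 1:]"
      by (rule pderiv_power_Suc)
    ultimately have "poly (pderiv p) r = 0" by simp
    then show False using assms(2) by blast
  qed
  then have "Polynomial.order r p < 2"
  proof (rule contrapos_np)
    assume "\<not> Polynomial.order r p < 2"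
    then have "[:-r, 1:] ^ 2 dvd [:-r, 1:] ^ Polynomial.order r p" by (simp add: le_imp_power_dvd)
    then show "[:-r, 1:] ^ 2 dvd p" using order_1[of r p] by (rule dvd_trans)
  qed
  ultimately show ?thesis by simp
qed

lemma cubic_poly_nonzero: "cubic_poly a b \<noteq> 0"
  by (simp add: cubic_poly_def)

text \<open>A double root \<open>x\<close> of \<open>x\<^sup>3 + a x - b\<close> has \<open>a = -3 x\<^sup>2\<close> and \<open>b = -2 x\<^sup>3\<close>, so
  \<open>2 v(b) = 6 v(x) = 3 v(a)\<close> since \<open>2\<close> and \<open>3\<close> are units.\<close>

lemma order_cubic_poly:
  fixes a b x :: "'p::prime_card qp"
  assumes p3: "CARD('p) > 3" and "b \<noteq> 0" and val: "2 * qp_val b \<noteq> 3 * qp_val a"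
    and root: "poly (cubic_poly a b) x = 0"
  shows "Polynomial.order x (cubic_poly a b) = 1"
proof (rule order_eq_1_if_pderiv_nonzero[OF root])
  have "\<not> CARD('p) dvd 2" "\<not> CARD('p) dvd 3" using p3 by (auto dest: dvd_imp_le)
  then have units: "qp_val (2::'p qp) = 0" "(2::'p qp) \<noteq> 0" "qp_val (3::'p qp) = 0" "(3::'p qp) \<noteq> 0"
    using qp_val_of_nat[of 2, where 'p='p] qp_val_of_nat[of 3, where 'p='p] by simp_all
  show "poly (pderiv (cubic_poly a b)) x \<noteq> 0"
  proof
    assume "poly (pderiv (cubic_poly a b)) x = 0"
    then have "a + 3 * x ^ 2 = 0" by (simp add: cubic_poly_def pderiv_pCons algebra_simps power2_eq_square)
    then have a: "a = - (3 * x ^ 2)" by (simp add: eq_neg_iff_add_eq_0)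
    then have b: "b = - (2 * x ^ 3)"
      using root by (simp add: poly_cubic_poly algebra_simps power2_eq_square power3_eq_cube)
    have "x \<noteq> 0" using root \<open>b \<noteq> 0\<close> by (auto simp: poly_cubic_poly)
    then have "qp_val a = 2 * qp_val x" "qp_val b = 3 * qp_val x"
      using units by (simp_all add: a b qp_val_uminus qp_val_mult qp_val_power)
    then show False using val by simp
  qed
qed

lemma root_count_eq_card:
  fixes a b :: "'p::prime_card qp"
  assumes "CARD('p) > 3" "b \<noteq> 0" "2 * qp_val b \<noteq> 3 * qp_val a"
  shows "root_count a b S = card ({x. poly (cubic_poly a b) x = 0} \<inter> S)"
proof -
  have "root_count a b S = (\<Sum>r \<in> {r \<in> S. poly (cubic_poly a b) r = 0}. 1)"
    unfolding root_count_def using order_cubic_poly[OF assms] by (intro sum.cong) auto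
  then show ?thesis by (simp add: Int_def conj_commute)
qed

lemma card_Int_Zp_regions:
  fixes T :: "'p::prime_card qp set"
  assumes "\<And>x. x \<in> T \<Longrightarrow> x \<noteq> 0 \<and> sgn (qp_val x) = s"
  shows "card (T \<inter> Zp_units) = (if s = 0 then card T else 0)"
    and "card (T \<inter> (Zp_set - Zp_units)) = (if s = 1 then card T else 0)"
    and "card (T \<inter> (UNIV - Zp_set)) = (if s = -1 then card T else 0)"
proof -
  have "x \<in> Zp_units \<longleftrightarrow> s = 0" "x \<in> Zp_set - Zp_units \<longleftrightarrow> s = 1" "x \<in> UNIV - Zp_set \<longleftrightarrow> s = -1"
    if "x \<in> T" for x
    using assms[OF that] mem_Zp_regions_iff[of x] by (auto simp: sgn_if)
  then have "T \<inter> Zp_units = (if s = 0 then T else {})"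
    and "T \<inter> (Zp_set - Zp_units) = (if s = 1 then T else {})"
    and "T \<inter> (UNIV - Zp_set) = (if s = -1 then T else {})"
    by auto
  then show "card (T \<inter> Zp_units) = (if s = 0 then card T else 0)"
    and "card (T \<inter> (Zp_set - Zp_units)) = (if s = 1 then card T else 0)"
    and "card (T \<inter> (UNIV - Zp_set)) = (if s = -1 then card T else 0)"
    by simp_all
qed

lemma roots_eq_roots_of_val_Delta1:
  fixes a b :: "'p::prime_card qp"
  assumes "a \<noteq> 0" "b \<noteq> 0" "2 * qp_val b < 3 * qp_val a" "qp_val b = 3 * m"
  shows "{x. poly (cubic_poly a b) x = 0} = roots_of_val a b m"
proof (intro equalityI subsetI)
  fix x assume "x \<in> {x. poly (cubic_poly a b) x = 0}"
  then have root: "poly (cubic_poly a b) x = 0" by simp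
  note val = qp_val_cubic_root[OF assms(1,2) root]
  consider "2 * qp_val x = qp_val a" | "qp_val b = min (3 * qp_val x) (qp_val a + qp_val x)"
    using val(3) by fastforce
  then have "qp_val x = m"
    using val(2) assms(3,4) by cases (auto simp: min_def split: if_splits)
  then show "x \<in> roots_of_val a b m" using root val(1) by (simp add: roots_of_val_def)
qed (simp add: roots_of_val_def)

lemma roots_eq_roots_of_val_Delta3:
  fixes a b :: "'p::prime_card qp"
  assumes a0: "a \<noteq> 0" and b0: "b \<noteq> 0" and val: "3 * qp_val a < 2 * qp_val b"
  shows "{x. poly (cubic_poly a b) x = 0} = roots_of_val a b (qp_val b - qp_val a) \<union>
    (if even (qp_val a) then roots_of_val a b (qp_val a div 2) else {})"
proof (intro equalityI subsetI)
  fix x assume "x \<in> {x. poly (cubic_poly a b) x = 0}"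
  then have root: "poly (cubic_poly a b) x = 0" by simp
  then have "x \<noteq> 0" by (rule qp_val_cubic_root(1)[OF a0 b0])
  note root_val = qp_val_cubic_root[OF a0 b0 root]
  consider "2 * qp_val x = qp_val a" | "qp_val b = min (3 * qp_val x) (qp_val a + qp_val x)"
    using root_val(3) by fastforce
  then have "qp_val x = qp_val b - qp_val a \<or> qp_val a = 2 * qp_val x"
    using root_val(2) val by cases (auto simp: min_def split: if_splits)
  then show "x \<in> roots_of_val a b (qp_val b - qp_val a) \<union>
      (if even (qp_val a) then roots_of_val a b (qp_val a div 2) else {})"
    using root \<open>x \<noteq> 0\<close> by (auto simp: roots_of_val_def)
qed (auto simp: roots_of_val_def split: if_splits)

lemma card_roots_of_val_Delta1:
  fixes a b :: "'p::prime_card qp" and ua ub :: "'p zp"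
  assumes p3: "CARD('p) > 3"
    and a: "a = zp_to_qp ua * qp_p powi \<alpha>" and b: "b = zp_to_qp ub * qp_p powi (3 * m)"
    and ub: "ub dvd 1" and val: "2 * m < \<alpha>" and cbrt: "cbrt_exists b"
  shows "card (roots_of_val a b m) = (if CARD('p) mod 3 = 1 then 3 else 1)"
proof -
  have "card (roots_of_val a b m) = card (unit_roots 1 (ua * zp_p ^ nat (\<alpha> - 2 * m)) ub)"
    using card_roots_of_val[OF a b, of "3 * m" m] val by (simp add: algebra_simps)
  also have "\<dots> = card {x \<in> {..<CARD('p)}. [x ^ 3 = zp_residue ub] (mod CARD('p))}"
    using val by (intro card_unit_roots_cube[OF p3 _ ub]) simp
  also have "\<dots> = (if CARD('p) mod 3 = 1 then 3 else 1)"
  proof (rule card_cube_roots_mod_prime[OF prime_card p3 not_dvd_residue_if_unit[OF ub]])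
    assume "CARD('p) mod 3 = 1"
    then have "gcd 3 (CARD('p) - 1) = 3" using dvd_pred_if_mod_3_eq_1 by (simp add: gcd_nat.absorb1)
    then show "[zp_residue ub ^ ((CARD('p) - 1) div 3) = 1] (mod CARD('p))"
      using cbrt qp_digit0_unit_power[OF ub] prime_gt_1_nat[OF prime_card[where 'a='p]]
      by (simp add: b cbrt_exists_def cong_def)
  qed
  finally show ?thesis .
qed

lemma card_roots_of_val_Delta3:
  fixes a b :: "'p::prime_card qp" and ua ub :: "'p zp"
  assumes p3: "CARD('p) > 3"
    and a: "a = zp_to_qp ua * qp_p powi \<alpha>" and b: "b = zp_to_qp ub * qp_p powi \<beta>"
    and ua: "ua dvd 1" and ub: "ub dvd 1" and val: "3 * \<alpha> < 2 * \<beta>"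
  shows "card (roots_of_val a b (\<beta> - \<alpha>)) = 1"
    and "\<alpha> = 2 * m \<Longrightarrow> card (roots_of_val a b m) = (if sqrt_exists (- a) then 2 else 0)"
proof -
  have "card (roots_of_val a b (\<beta> - \<alpha>)) = card (unit_roots (zp_p ^ nat (2 * \<beta> - 3 * \<alpha>)) ua ub)"
    using card_roots_of_val[OF a b, of \<beta> "\<beta> - \<alpha>"] val by (simp add: algebra_simps)
  also have "\<dots> = card {x \<in> {..<CARD('p)}. [zp_residue ua * x = zp_residue ub] (mod CARD('p))}"
    using val by (intro card_unit_roots_linear ua ub) simp
  also have "\<dots> = 1"
    by (rule card_linear_roots_mod_prime[OF prime_card not_dvd_residue_if_unit[OF ua]])
  finally show "card (roots_of_val a b (\<beta> - \<alpha>)) = 1" .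
  assume "\<alpha> = 2 * m"
  then have "card (roots_of_val a b m) = card (unit_roots 1 ua (ub * zp_p ^ nat (\<beta> - 3 * m)))"
    using card_roots_of_val[OF a b, of "3 * m" m] val by simp
  also have "\<dots> = card {x \<in> {..<CARD('p)}. [x\<^sup>2 = zp_residue (- ua)] (mod CARD('p))}"
    using val \<open>\<alpha> = 2 * m\<close> by (intro card_unit_roots_quadratic p3 ua) simp
  also have "\<dots> = (if [zp_residue (- ua) ^ ((CARD('p) - 1) div 2) = 1] (mod CARD('p)) then 2 else 0)"
    using p3 ua by (intro card_square_roots_mod_prime prime_card not_dvd_residue_if_unit) simp_all
  also have "\<dots> = (if sqrt_exists (- a) then 2 else 0)"
    using \<open>\<alpha> = 2 * m\<close> by (simp add: a sqrt_exists_uminus_iff[OF ua])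
  finally show "card (roots_of_val a b m) = (if sqrt_exists (- a) then 2 else 0)" .
qed

lemma root_count_Delta1:
  fixes a b :: "'p::prime_card qp" and ua ub :: "'p zp"
  assumes p3: "CARD('p) > 3"
    and a: "a = zp_to_qp ua * qp_p powi \<alpha>" and b: "b = zp_to_qp ub * qp_p powi \<beta>"
    and ua: "ua dvd 1" and ub: "ub dvd 1" and val: "2 * \<beta> < 3 * \<alpha>" and cbrt: "cbrt_exists b"
  defines "N \<equiv> if CARD('p) mod 3 = 1 then 3 else 1"
  shows "root_count a b UNIV = N"
    and "root_count a b Zp_units = (if \<beta> = 0 then N else 0)"
    and "root_count a b (Zp_set - Zp_units) = (if \<beta> > 0 then N else 0)"
    and "root_count a b (UNIV - Zp_set) = (if \<beta> < 0 then N else 0)"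
proof -
  have a0: "a \<noteq> 0" and b0: "b \<noteq> 0" and va: "qp_val a = \<alpha>" and vb: "qp_val b = \<beta>"
    using a b qp_unit_power_nonzero[OF ua] qp_unit_power_nonzero[OF ub]
      qp_val_unit_power[OF ua] qp_val_unit_power[OF ub] by simp_all
  obtain m where m: "\<beta> = 3 * m" using cbrt vb by (auto simp: cbrt_exists_def elim!: dvdE)
  define R where "R = roots_of_val a b m"
  have "root_count a b S = card (R \<inter> S)" for S
    using root_count_eq_card[OF p3 b0] roots_eq_roots_of_val_Delta1[OF a0 b0] val va vb m
    by (simp add: R_def)
  moreover have "card R = N"
    using card_roots_of_val_Delta1[OF p3 a b[unfolded m] ub _ cbrt] val m by (simp add: R_def N_def)
  moreover have "x \<noteq> 0 \<and> sgn (qp_val x) = sgn \<beta>" if "x \<in> R" for x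
    using that m by (auto simp: R_def roots_of_val_def sgn_if)
  note regions = card_Int_Zp_regions[of R, OF this]
  ultimately show "root_count a b UNIV = N"
    and "root_count a b Zp_units = (if \<beta> = 0 then N else 0)"
    and "root_count a b (Zp_set - Zp_units) = (if \<beta> > 0 then N else 0)"
    and "root_count a b (UNIV - Zp_set) = (if \<beta> < 0 then N else 0)"
    using regions by (simp_all add: sgn_if)
qed

lemma root_count_Delta3:
  fixes a b :: "'p::prime_card qp" and ua ub :: "'p zp"
  assumes p3: "CARD('p) > 3"
    and a: "a = zp_to_qp ua * qp_p powi \<alpha>" and b: "b = zp_to_qp ub * qp_p powi \<beta>"
    and ua: "ua dvd 1" and ub: "ub dvd 1" and val: "3 * \<alpha> < 2 * \<beta>"
  defines "M \<equiv> if sqrt_exists (- a) then 2 else 0"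
  shows "root_count a b UNIV = 1 + M"
    and "root_count a b Zp_units = (if \<beta> = \<alpha> then 1 else 0) + (if \<alpha> = 0 then M else 0)"
    and "root_count a b (Zp_set - Zp_units) = (if \<beta> > \<alpha> then 1 else 0) + (if \<alpha> > 0 then M else 0)"
    and "root_count a b (UNIV - Zp_set) = (if \<beta> < \<alpha> then 1 else 0) + (if \<alpha> < 0 then M else 0)"
proof -
  have a0: "a \<noteq> 0" and b0: "b \<noteq> 0" and va: "qp_val a = \<alpha>" and vb: "qp_val b = \<beta>"
    using a b qp_unit_power_nonzero[OF ua] qp_unit_power_nonzero[OF ub]
      qp_val_unit_power[OF ua] qp_val_unit_power[OF ub] by simp_all
  define R1 where "R1 = roots_of_val a b (\<beta> - \<alpha>)"
  define R2 where "R2 = (if even \<alpha> then roots_of_val a b (\<alpha> div 2) else {})"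
  have roots: "{x. poly (cubic_poly a b) x = 0} = R1 \<union> R2"
    using roots_eq_roots_of_val_Delta3[OF a0 b0] val va vb by (simp add: R1_def R2_def)
  have "R1 \<inter> R2 = {}"
  proof -
    have "2 * (\<beta> - \<alpha>) \<noteq> \<alpha>" using val by simp
    then show ?thesis by (auto simp: R1_def R2_def roots_of_val_def elim!: evenE)
  qed
  moreover have "finite (R1 \<union> R2)" unfolding roots[symmetric] by (rule poly_roots_finite[OF cubic_poly_nonzero])
  ultimately have "root_count a b S = card (R1 \<inter> S) + card (R2 \<inter> S)" for S
    using root_count_eq_card[OF p3 b0] val va vb roots
    by (simp add: Int_Un_distrib2 card_Un_disjoint[symmetric] disjoint_iff)
  moreover have "card R1 = 1" unfolding R1_def by (rule card_roots_of_val_Delta3(1)[OF assms(1-6)])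
  moreover have "card R2 = M"
    using card_roots_of_val_Delta3(2)[OF assms(1-6)] sqrt_exists_uminus_iff[OF ua]
    by (auto simp: R2_def M_def a elim!: evenE)
  moreover have "x \<noteq> 0 \<and> sgn (qp_val x) = sgn (\<beta> - \<alpha>)" if "x \<in> R1" for x
    using that by (simp add: R1_def roots_of_val_def)
  note regions1 = card_Int_Zp_regions[of R1, OF this]
  moreover have "x \<noteq> 0 \<and> sgn (qp_val x) = sgn \<alpha>" if "x \<in> R2" for x
    using that by (auto simp: R2_def roots_of_val_def sgn_if split: if_splits elim!: evenE)
  note regions2 = card_Int_Zp_regions[of R2, OF this]
  ultimately show "root_count a b UNIV = 1 + M"
    and "root_count a b Zp_units = (if \<beta> = \<alpha> then 1 else 0) + (if \<alpha> = 0 then M else 0)"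
    and "root_count a b (Zp_set - Zp_units) = (if \<beta> > \<alpha> then 1 else 0) + (if \<alpha> > 0 then M else 0)"
    and "root_count a b (UNIV - Zp_set) = (if \<beta> < \<alpha> then 1 else 0) + (if \<alpha> < 0 then M else 0)"
    using regions2 by (simp_all add: sgn_if)
qed

theorem mainTheorem1:
  fixes a b :: "'p::prime_card qp"
  assumes p3: "CARD('p) > 3"
    and ab: "a * b \<noteq> 0"
    and D: "(a, b) \<in> Delta1 \<union> Delta3"
  shows
    "(solvable_in a b Zp_units 3 \<longleftrightarrow>
        (a, b) \<in> Delta1 \<and> padic_abs b = 1 \<and> CARD('p) mod 3 = 1)
   \<and> (solvable_in a b (Zp_set - Zp_units) 3 \<longleftrightarrow>
        ((a, b) \<in> Delta1 \<and> padic_abs b < 1 \<and> CARD('p) mod 3 = 1) \<or>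
        ((a, b) \<in> Delta3 \<and> padic_abs a < 1 \<and> sqrt_exists (- a)))
   \<and> (solvable_in a b (UNIV - Zp_set) 3 \<longleftrightarrow>
        ((a, b) \<in> Delta1 \<and> padic_abs b > 1 \<and> CARD('p) mod 3 = 1) \<or>
        ((a, b) \<in> Delta3 \<and> padic_abs b > padic_abs a \<and> sqrt_exists (- a)))
   \<and> (solvable_in2 a b (Zp_set - Zp_units) 1 Zp_units 2 \<longleftrightarrow>
        (a, b) \<in> Delta3 \<and> padic_abs a = 1 \<and> sqrt_exists (- a))
   \<and> (solvable_in2 a b Zp_units 1 (UNIV - Zp_set) 2 \<longleftrightarrow>
        (a, b) \<in> Delta3 \<and> padic_abs a = padic_abs b \<and> sqrt_exists (- a))
   \<and> (solvable_in2 a b (Zp_set - Zp_units) 1 (UNIV - Zp_set) 2 \<longleftrightarrow>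
        (a, b) \<in> Delta3 \<and> padic_abs a > padic_abs b \<and> padic_abs a > 1 \<and> sqrt_exists (- a))
   \<and> (solvable_in a b Zp_units 1 \<longleftrightarrow>
        ((a, b) \<in> Delta1 \<and> padic_abs b = 1 \<and> CARD('p) mod 3 = 2) \<or>
        ((a, b) \<in> Delta3 \<and> padic_abs a = padic_abs b \<and> \<not> sqrt_exists (- a)))
   \<and> (solvable_in a b (Zp_set - Zp_units) 1 \<longleftrightarrow>
        ((a, b) \<in> Delta1 \<and> padic_abs b < 1 \<and> CARD('p) mod 3 = 2) \<or>
        ((a, b) \<in> Delta3 \<and> padic_abs a > padic_abs b \<and> \<not> sqrt_exists (- a)))
   \<and> (solvable_in a b (UNIV - Zp_set) 1 \<longleftrightarrow>
        ((a, b) \<in> Delta1 \<and> padic_abs b > 1 \<and> CARD('p) mod 3 = 2) \<or>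
        ((a, b) \<in> Delta3 \<and> padic_abs a < padic_abs b \<and> \<not> sqrt_exists (- a)))"
proof -
  have a0: "a \<noteq> 0" and b0: "b \<noteq> 0" using ab by auto
  obtain ua \<alpha> where ua: "ua dvd 1" and a: "a = zp_to_qp ua * qp_p powi \<alpha>"
    using a0 by (rule qp_unit_power_decomp)
  obtain ub \<beta> where ub: "ub dvd 1" and b: "b = zp_to_qp ub * qp_p powi \<beta>"
    using b0 by (rule qp_unit_power_decomp)
  have vals: "qp_val a = \<alpha>" "qp_val b = \<beta>"
    using a b qp_val_unit_power[OF ua] qp_val_unit_power[OF ub] by simp_all
  note iffs = padic_abs_compare_1[OF a0] padic_abs_compare_1[OF b0] padic_abs_eq_iff[OF a0 b0]
    padic_abs_less_iff[OF a0 b0] padic_abs_less_iff[OF b0 a0] Delta1_iff[OF a0 b0] Delta3_iff[OF a0 b0]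
  show ?thesis
  proof (cases "(a, b) \<in> Delta1")
    case True
    then have "2 * \<beta> < 3 * \<alpha>" "cbrt_exists b" using iffs vals by simp_all
    then show ?thesis
      using True root_count_Delta1[OF p3 a b ua ub] prime_mod_3_cases[OF prime_card p3]
      unfolding solvable_in_def solvable_in2_def iffs vals by auto
  next
    case False
    then have "3 * \<alpha> < 2 * \<beta>" using D iffs vals by auto
    then show ?thesis
      using False root_count_Delta3[OF p3 a b ua ub]
      unfolding solvable_in_def solvable_in2_def iffs vals by auto
  qed
qed

end
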